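(* Let $\mathbb{K}$ be a field, $m\ge 3$, $R=\mathbb{K}[T_1,\dots,T_m]$, $S=R[X_1,\dots,X_m,W]$, and let $a_1,\dots,a_m,b_1,\dots,b_m$ be integers with $0\le b_i<a_i$ for all $i$ and $b_i\ne0$ for at least two $i$. Let $\mathcal{H}_0\subset S$ be the ideal generated by $\Gamma_0=\{\mathcal{P}(X_i,X_j)\mid 1\le j<i\le m+1\}$. Then $\operatorname{depth}(S/\operatorname{in}(\mathcal{H}_0))\ge m+1$, where $\operatorname{in}$ is taken with respect to $\tau$.
   Context: Write $\mathbf{T}^{\mathbf{b}}=T_1^{b_1}\cdots T_m^{b_m}$ and $X_{m+1}:=W$. Let $\Psi:S\to R$ be the $R$-algebra map $X_i\mapsto T_i^{a_i}$ ($1\le i\le m$), $W\mapsto\mathbf{T}^{\mathbf{b}}$. For monomials $M,N$ in $X_1,\dots,X_m,W$, with $g=\gcd(\Psi(M),\Psi(N))$, set $\mathcal{P}(M,N)=\frac{\Psi(N)}{g}M-\frac{\Psi(M)}{g}N$. (Thus $\mathcal{H}_0=L_1S$, the ideal generated by the linear part of the defining ideal of the Rees algebra of $I=\langle T_1^{a_1},\dots,T_m^{a_m},\mathbf{T}^{\mathbf{b}}\rangle$.) The order $\tau$ is lex on $S$ with $W>X_m>\cdots>X_1>T_1>\cdots>T_m$. *)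

theory Defs
  imports Main "HOL-Library.Poly_Mapping" "HOL-Library.Extended_Nat"
begin

text \<open>Variables. X (m+1) plays the role of W.\<close>
datatype var = T nat | X nat

type_synonym 'k mpoly = "(var \<Rightarrow>\<^sub>0 nat) \<Rightarrow>\<^sub>0 'k"

definition vars :: "nat \<Rightarrow> var set" where
  "vars m = {T i | i. 1 \<le> i \<and> i \<le> m} \<union> {X i | i. 1 \<le> i \<and> i \<le> m + 1}"

definition Sring :: "nat \<Rightarrow> 'k::field mpoly set" where
  "Sring m = {p :: 'k mpoly. \<forall>\<alpha>\<in>Poly_Mapping.keys p. Poly_Mapping.keys \<alpha> \<subseteq> vars m}"

definition mono :: "(var \<Rightarrow>\<^sub>0 nat) \<Rightarrow> 'k::field mpoly" where
  "mono \<alpha> = Poly_Mapping.single \<alpha> 1"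

definition varexp :: "var \<Rightarrow> (var \<Rightarrow>\<^sub>0 nat)" where
  "varexp v = Poly_Mapping.single v 1"

definition ideal_gen :: "nat \<Rightarrow> 'k::field mpoly set \<Rightarrow> 'k mpoly set" where
  "ideal_gen m G = {p. \<exists>F c. finite F \<and> F \<subseteq> G \<and> (\<forall>g\<in>F. c g \<in> Sring m)
                          \<and> p = (\<Sum>g\<in>F. c g * g)}"

text \<open>Exponent vector of Psi(M) for a monomial M with exponent vector alpha:
  T_i fixed, X_i to T_i^(a_i), W = X (m+1) to T^b.\<close>
definition psi_exp :: "nat \<Rightarrow> (nat \<Rightarrow> nat) \<Rightarrow> (nat \<Rightarrow> nat) \<Rightarrow> (var \<Rightarrow>\<^sub>0 nat) \<Rightarrow> (var \<Rightarrow>\<^sub>0 nat)" where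
  "psi_exp m a b \<alpha> = (\<Sum>i\<in>{1..m}. Poly_Mapping.single (T i)
       (Poly_Mapping.lookup \<alpha> (T i) + a i * Poly_Mapping.lookup \<alpha> (X i) + b i * Poly_Mapping.lookup \<alpha> (X (m + 1))))"

lift_definition gcd_exp :: "(var \<Rightarrow>\<^sub>0 nat) \<Rightarrow> (var \<Rightarrow>\<^sub>0 nat) \<Rightarrow> (var \<Rightarrow>\<^sub>0 nat)"
  is "\<lambda>f g v. min (f v) (g v)"
proof -
  fix f g :: "var \<Rightarrow> nat"
  assume "finite {x. f x \<noteq> 0}"
  moreover have "{x. min (f x) (g x) \<noteq> 0} \<subseteq> {x. f x \<noteq> 0}" by auto
  ultimately show "finite {x. min (f x) (g x) \<noteq> 0}" by (rule finite_subset[rotated])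
qed

text \<open>P(M,N) = (Psi(N)/g) M - (Psi(M)/g) N with g = gcd(Psi(M),Psi(N));
  monomials given by exponent vectors alpha (for M) and beta (for N).\<close>
definition Pbin :: "nat \<Rightarrow> (nat \<Rightarrow> nat) \<Rightarrow> (nat \<Rightarrow> nat) \<Rightarrow> (var \<Rightarrow>\<^sub>0 nat) \<Rightarrow> (var \<Rightarrow>\<^sub>0 nat) \<Rightarrow> 'k::field mpoly" where
  "Pbin m a b \<alpha> \<beta> =
     (let g = gcd_exp (psi_exp m a b \<alpha>) (psi_exp m a b \<beta>)
      in mono (psi_exp m a b \<beta> - g) * mono \<alpha> - mono (psi_exp m a b \<alpha> - g) * mono \<beta>)"

definition Gamma0 :: "nat \<Rightarrow> (nat \<Rightarrow> nat) \<Rightarrow> (nat \<Rightarrow> nat) \<Rightarrow> 'k::field mpoly set" where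
  "Gamma0 m a b = {Pbin m a b (varexp (X i)) (varexp (X j)) | i j. 1 \<le> j \<and> j < i \<and> i \<le> m + 1}"

definition H0 :: "nat \<Rightarrow> (nat \<Rightarrow> nat) \<Rightarrow> (nat \<Rightarrow> nat) \<Rightarrow> 'k::field mpoly set" where
  "H0 m a b = ideal_gen m (Gamma0 m a b)"

text \<open>Rank of variables: W > X_m > ... > X_1 > T_1 > ... > T_m.\<close>
fun rank :: "nat \<Rightarrow> var \<Rightarrow> nat" where
  "rank m (X i) = m + i"
| "rank m (T i) = m + 1 - i"

definition lex_less :: "nat \<Rightarrow> (var \<Rightarrow>\<^sub>0 nat) \<Rightarrow> (var \<Rightarrow>\<^sub>0 nat) \<Rightarrow> bool" where
  "lex_less m \<alpha> \<beta> \<longleftrightarrow> (\<exists>v\<in>vars m. Poly_Mapping.lookup \<alpha> v < Poly_Mapping.lookup \<beta> v \<and>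
       (\<forall>u\<in>vars m. rank m v < rank m u \<longrightarrow> Poly_Mapping.lookup \<alpha> u = Poly_Mapping.lookup \<beta> u))"

definition lead_exp :: "nat \<Rightarrow> 'k::field mpoly \<Rightarrow> (var \<Rightarrow>\<^sub>0 nat)" where
  "lead_exp m p = (THE \<alpha>. \<alpha> \<in> Poly_Mapping.keys p \<and> (\<forall>\<beta>\<in>Poly_Mapping.keys p. \<beta> \<noteq> \<alpha> \<longrightarrow> lex_less m \<beta> \<alpha>))"

definition initial_ideal :: "nat \<Rightarrow> 'k::field mpoly set \<Rightarrow> 'k mpoly set" where
  "initial_ideal m J = ideal_gen m {mono (lead_exp m p) | p. p \<in> J \<and> p \<noteq> 0}"

definition max_ideal :: "nat \<Rightarrow> 'k::field mpoly set" where
  "max_ideal m = {p \<in> Sring m. Poly_Mapping.lookup p 0 = 0}"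

definition regular_seq :: "nat \<Rightarrow> 'k::field mpoly set \<Rightarrow> 'k mpoly list \<Rightarrow> bool" where
  "regular_seq m J fs \<longleftrightarrow>
     set fs \<subseteq> max_ideal m \<and>
     (\<forall>k < length fs. \<forall>g\<in>Sring m.
        fs ! k * g \<in> ideal_gen m (J \<union> set (take k fs)) \<longrightarrow> g \<in> ideal_gen m (J \<union> set (take k fs))) \<and>
     ideal_gen m (J \<union> set fs) \<noteq> Sring m"

definition depth_quot :: "nat \<Rightarrow> 'k::field mpoly set \<Rightarrow> enat" where
  "depth_quot m J = Sup {enat (length fs) | fs. regular_seq m J fs}"

end

theory Submission
  imports Defs "HOL-Library.Confluence"
begin

text \<open>Read the binomials of \<open>\<Gamma>\<^sub>0\<close> as rewrite rules on exponents,
  \<open>T\<^sub>j\<^bsup>a\<^sub>j\<^esup> X\<^sub>i \<rightarrow> T\<^sub>i\<^bsup>a\<^sub>i\<^esup> X\<^sub>j\<close> for \<open>j < i \<le> m\<close> and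
  \<open>T\<^sub>j\<^bsup>a\<^sub>j - b\<^sub>j\<^esup> W \<rightarrow> X\<^sub>j \<Prod>\<^sub>l\<^sub>\<noteq>\<^sub>j T\<^sub>l\<^bsup>b\<^sub>l\<^esup>\<close>, each replacing a monomial by a \<open>\<tau>\<close>-smaller one.
  All critical pairs close in one step, so rewriting is confluent, and then \<open>\<Gamma>\<^sub>0\<close> is a Groebner
  basis: a leading exponent that could not be rewritten would carry the whole coefficient sum of
  its rewriting class, which vanishes on the ideal. Hence \<open>in(\<H>\<^sub>0)\<close> is generated by the left-hand
  sides.

  Then \<open>X\<^sub>1, T\<^sub>1 - X\<^sub>2, \<dots>, T\<^sub>m - X\<^sub>m\<^sub>+\<^sub>1\<close> is a regular sequence on \<open>S/in(\<H>\<^sub>0)\<close>. Modulo its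
  first \<open>k\<close> elements, substituting \<open>T\<^sub>j\<close> for \<open>X\<^sub>j\<^sub>+\<^sub>1\<close> identifies a polynomial with the
  coefficient sums at the standard exponents, those not divisible by a substituted generator.
  Multiplying by \<open>X\<^sub>1\<close> is injective because no generator involves \<open>X\<^sub>1\<close>; multiplying by
  \<open>T\<^sub>k - X\<^sub>k\<^sub>+\<^sub>1\<close> is injective because in every \<open>(T\<^sub>k, X\<^sub>k\<^sub>+\<^sub>1)\<close>-slice the standard exponents
  through any standard point fill a whole row or a whole column.\<close>

lemma lookup_mono: "Poly_Mapping.lookup (mono \<alpha> :: 'k::field mpoly) \<beta> = (if \<beta> = \<alpha> then 1 else 0)"
  by (simp add: mono_def lookup_single when_def eq_commute)

lemma keys_mono [simp]: "Poly_Mapping.keys (mono \<alpha> :: 'k::field mpoly) = {\<alpha>}"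
  by (simp add: mono_def)

lemma mono_mult: "mono \<alpha> * mono \<beta> = (mono (\<alpha> + \<beta>) :: 'k::field mpoly)"
  by (simp add: mono_def mult_single)

lemma lookup_varexp: "Poly_Mapping.lookup (varexp v) u = (if u = v then 1 else 0)"
  by (simp add: varexp_def lookup_single when_def eq_commute)

lemma keys_varexp [simp]: "Poly_Mapping.keys (varexp v) = {v}"
  by (simp add: varexp_def)

lemma varexp_neq_zero [simp]: "varexp v \<noteq> 0"
  using keys_varexp[of v] by force

lemma keys_add_nat:
  "Poly_Mapping.keys ((\<alpha> :: 'a \<Rightarrow>\<^sub>0 nat) + \<beta>) = Poly_Mapping.keys \<alpha> \<union> Poly_Mapping.keys \<beta>"
  by (auto simp: in_keys_iff lookup_add)

lemma poly_mapping_sum_single: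
  "p = (\<Sum>\<rho>\<in>Poly_Mapping.keys p. Poly_Mapping.single \<rho> (Poly_Mapping.lookup p \<rho>))"
  by (rule poly_mapping_eqI) (simp add: lookup_sum lookup_single when_def in_keys_iff)

lemma single_sum: "Poly_Mapping.single c (sum f A) = (\<Sum>x\<in>A. Poly_Mapping.single c (f x))"
  by (induction A rule: infinite_finite_induct) (auto simp: single_add)

definition exp_dvd :: "('a \<Rightarrow>\<^sub>0 nat) \<Rightarrow> ('a \<Rightarrow>\<^sub>0 nat) \<Rightarrow> bool" where
  "exp_dvd u \<alpha> \<longleftrightarrow> (\<forall>x. Poly_Mapping.lookup u x \<le> Poly_Mapping.lookup \<alpha> x)"

lemma exp_dvdI: "(\<And>x. Poly_Mapping.lookup u x \<le> Poly_Mapping.lookup \<alpha> x) \<Longrightarrow> exp_dvd u \<alpha>"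
  by (simp add: exp_dvd_def)

lemma exp_dvdD: "exp_dvd u \<alpha> \<Longrightarrow> Poly_Mapping.lookup u x \<le> Poly_Mapping.lookup \<alpha> x"
  by (simp add: exp_dvd_def)

lemma exp_dvd_add: "exp_dvd u (\<nu> + u)"
  by (simp add: exp_dvd_def lookup_add)

lemma exp_dvd_diff_add: "exp_dvd u \<alpha> \<Longrightarrow> \<alpha> - u + u = \<alpha>"
  by (rule poly_mapping_eqI) (simp add: exp_dvd_def lookup_add lookup_minus)

lemma SringI: "(\<And>\<alpha>. \<alpha> \<in> Poly_Mapping.keys p \<Longrightarrow> Poly_Mapping.keys \<alpha> \<subseteq> vars m) \<Longrightarrow> p \<in> Sring m"
  by (auto simp: Sring_def)

lemma SringD: "p \<in> Sring m \<Longrightarrow> \<alpha> \<in> Poly_Mapping.keys p \<Longrightarrow> Poly_Mapping.keys \<alpha> \<subseteq> vars m"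
  by (auto simp: Sring_def)

lemma Sring_mult: "p \<in> Sring m \<Longrightarrow> q \<in> Sring m \<Longrightarrow> p * q \<in> Sring m"
proof (rule SringI)
  fix \<gamma> assume p: "p \<in> Sring m" and q: "q \<in> Sring m" and "\<gamma> \<in> Poly_Mapping.keys (p * q)"
  then obtain \<alpha> \<beta> where "\<gamma> = \<alpha> + \<beta>" "\<alpha> \<in> Poly_Mapping.keys p" "\<beta> \<in> Poly_Mapping.keys q"
    using keys_mult by blast
  then show "Poly_Mapping.keys \<gamma> \<subseteq> vars m"
    using SringD[OF p] SringD[OF q] by (auto simp: keys_add_nat)
qed

lemma Sring_add: "p \<in> Sring m \<Longrightarrow> q \<in> Sring m \<Longrightarrow> p + q \<in> Sring m"
  by (rule SringI) (auto dest!: set_mp[OF keys_add] dest: SringD)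

lemma Sring_uminus: "p \<in> Sring m \<Longrightarrow> - p \<in> Sring m"
  by (auto simp: Sring_def keys_minus)

lemma Sring_diff: "p \<in> Sring m \<Longrightarrow> q \<in> Sring m \<Longrightarrow> p - q \<in> Sring m"
  by (metis Sring_add Sring_uminus diff_conv_add_uminus)

lemma Sring_zero [simp]: "0 \<in> Sring m"
  by (simp add: Sring_def)

lemma Sring_single: "Poly_Mapping.keys \<alpha> \<subseteq> vars m \<Longrightarrow> Poly_Mapping.single \<alpha> r \<in> Sring m"
  by (auto simp: Sring_def)

lemma Sring_mono: "Poly_Mapping.keys \<alpha> \<subseteq> vars m \<Longrightarrow> mono \<alpha> \<in> Sring m"
  by (simp add: mono_def Sring_single)

lemma Sring_const: "Poly_Mapping.single 0 r \<in> Sring m"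
  by (simp add: Sring_single)

lemma Sring_one [simp]: "1 \<in> Sring m"
  by (simp add: Sring_def)

lemma Sring_sum: "(\<And>i. i \<in> I \<Longrightarrow> f i \<in> Sring m) \<Longrightarrow> sum f I \<in> Sring m"
  by (induction I rule: infinite_finite_induct) (auto intro: Sring_add)

lemma ideal_genE:
  assumes "x \<in> ideal_gen m G"
  obtains F c where "finite F" "F \<subseteq> G" "\<And>g. g \<in> F \<Longrightarrow> c g \<in> Sring m" "x = (\<Sum>g\<in>F. c g * g)"
  using assms unfolding ideal_gen_def by blast

lemma ideal_genI:
  "finite F \<Longrightarrow> F \<subseteq> G \<Longrightarrow> (\<And>g. g \<in> F \<Longrightarrow> c g \<in> Sring m) \<Longrightarrow> (\<Sum>g\<in>F. c g * g) \<in> ideal_gen m G"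
  unfolding ideal_gen_def by blast

lemma ideal_gen_zero [simp]: "0 \<in> ideal_gen m G"
  using ideal_genI[of "{}" G] by simp

lemma ideal_gen_gen: "g \<in> G \<Longrightarrow> g \<in> ideal_gen m G"
  using ideal_genI[of "{g}" G "\<lambda>_. 1"] by simp

lemma ideal_gen_add:
  assumes "x \<in> ideal_gen m G" "y \<in> ideal_gen m G"
  shows "x + y \<in> ideal_gen m G"
proof -
  obtain F1 c1 where 1: "finite F1" "F1 \<subseteq> G" "\<And>g. g \<in> F1 \<Longrightarrow> c1 g \<in> Sring m" "x = (\<Sum>g\<in>F1. c1 g * g)"
    using assms(1) by (elim ideal_genE) blast
  obtain F2 c2 where 2: "finite F2" "F2 \<subseteq> G" "\<And>g. g \<in> F2 \<Longrightarrow> c2 g \<in> Sring m" "y = (\<Sum>g\<in>F2. c2 g * g)"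
    using assms(2) by (elim ideal_genE) blast
  define d where "d g = (if g \<in> F1 then c1 g else 0) + (if g \<in> F2 then c2 g else 0)" for g
  have "x = (\<Sum>g\<in>F1 \<union> F2. (if g \<in> F1 then c1 g else 0) * g)"
    unfolding 1(4) using 1(1) 2(1) by (intro sum.mono_neutral_cong_left) auto
  moreover have "y = (\<Sum>g\<in>F1 \<union> F2. (if g \<in> F2 then c2 g else 0) * g)"
    unfolding 2(4) using 1(1) 2(1) by (intro sum.mono_neutral_cong_left) auto
  ultimately have "x + y = (\<Sum>g\<in>F1 \<union> F2. d g * g)"
    by (simp add: d_def distrib_right sum.distrib)
  moreover have "d g \<in> Sring m" for g
    using 1(3) 2(3) by (simp add: d_def Sring_add)
  ultimately show ?thesis
    using 1(1,2) 2(1,2) ideal_genI[of "F1 \<union> F2" G d m] by simp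
qed

lemma ideal_gen_mult:
  assumes "c \<in> Sring m" "x \<in> ideal_gen m G"
  shows "c * x \<in> ideal_gen m G"
proof -
  obtain F d where "finite F" "F \<subseteq> G" "\<And>g. g \<in> F \<Longrightarrow> d g \<in> Sring m" "x = (\<Sum>g\<in>F. d g * g)"
    using assms(2) by (elim ideal_genE) blast
  then show ?thesis
    using ideal_genI[of F G "\<lambda>g. c * d g"] assms(1)
    by (simp add: sum_distrib_left mult.assoc Sring_mult)
qed

lemma ideal_gen_uminus: "x \<in> ideal_gen m G \<Longrightarrow> - x \<in> ideal_gen m G"
  using ideal_gen_mult[OF Sring_uminus[OF Sring_one]] by fastforce

lemma ideal_gen_diff: "x \<in> ideal_gen m G \<Longrightarrow> y \<in> ideal_gen m G \<Longrightarrow> x - y \<in> ideal_gen m G"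
  by (metis diff_conv_add_uminus ideal_gen_add ideal_gen_uminus)

lemma ideal_gen_sum: "(\<And>i. i \<in> I \<Longrightarrow> f i \<in> ideal_gen m G) \<Longrightarrow> sum f I \<in> ideal_gen m G"
  by (induction I rule: infinite_finite_induct) (auto intro: ideal_gen_add)

lemma ideal_gen_mono: "G \<subseteq> G' \<Longrightarrow> ideal_gen m G \<subseteq> ideal_gen m G'"
  unfolding ideal_gen_def by blast

lemma ideal_gen_subset:
  assumes "G \<subseteq> ideal_gen m G'"
  shows "ideal_gen m G \<subseteq> ideal_gen m G'"
proof
  fix x assume "x \<in> ideal_gen m G"
  then obtain F d where "F \<subseteq> G" "\<And>g. g \<in> F \<Longrightarrow> d g \<in> Sring m" "x = (\<Sum>g\<in>F. d g * g)"
    by (elim ideal_genE) blast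
  then show "x \<in> ideal_gen m G'"
    using assms by (auto intro!: ideal_gen_sum ideal_gen_mult)
qed

lemma ideal_gen_Un_ideal_gen: "ideal_gen m (ideal_gen m A \<union> B) = ideal_gen m (A \<union> B)"
proof
  show "ideal_gen m (ideal_gen m A \<union> B) \<subseteq> ideal_gen m (A \<union> B)"
    using ideal_gen_mono[of A "A \<union> B" m] ideal_gen_gen[of _ "A \<union> B" m]
    by (intro ideal_gen_subset) blast
  show "ideal_gen m (A \<union> B) \<subseteq> ideal_gen m (ideal_gen m A \<union> B)"
    using ideal_gen_gen[of _ A m] by (intro ideal_gen_mono) blast
qed

lemma ideal_gen_subset_Sring: "G \<subseteq> Sring m \<Longrightarrow> ideal_gen m G \<subseteq> Sring m"
  unfolding ideal_gen_def by (auto intro!: Sring_sum Sring_mult)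

lemma mono_mult_mem_ideal_gen:
  "Poly_Mapping.keys \<nu> \<subseteq> vars m \<Longrightarrow> mono u \<in> ideal_gen m G \<Longrightarrow> mono (\<nu> + u) \<in> ideal_gen m G"
  using ideal_gen_mult[OF Sring_mono] by (fastforce simp: mono_mult)

section \<open>Coefficient sums over the fibres of a map on exponents\<close>

definition fiber_coeff :: "((var \<Rightarrow>\<^sub>0 nat) \<Rightarrow> 'c) \<Rightarrow> 'c \<Rightarrow> 'k::field mpoly \<Rightarrow> 'k" where
  "fiber_coeff \<Phi> c h = (\<Sum>\<rho>\<in>Poly_Mapping.keys h. if \<Phi> \<rho> = c then Poly_Mapping.lookup h \<rho> else 0)"

lemma fiber_coeff_superset:
  assumes "finite A" "Poly_Mapping.keys h \<subseteq> A"
  shows "fiber_coeff \<Phi> c h = (\<Sum>\<rho>\<in>A. if \<Phi> \<rho> = c then Poly_Mapping.lookup h \<rho> else 0)"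
  unfolding fiber_coeff_def
  by (rule sum.mono_neutral_left) (use assms in \<open>auto simp: in_keys_iff\<close>)

lemma fiber_coeff_add: "fiber_coeff \<Phi> c (p + q) = fiber_coeff \<Phi> c p + fiber_coeff \<Phi> c q"
proof -
  let ?A = "Poly_Mapping.keys p \<union> Poly_Mapping.keys q"
  have fin: "finite ?A" by simp
  have sub: "Poly_Mapping.keys (p + q) \<subseteq> ?A" by (rule keys_add)
  show ?thesis
    by (simp add: fiber_coeff_superset[OF fin sub] fiber_coeff_superset[OF fin] lookup_add sum.distrib[symmetric]
        if_distrib[where f="\<lambda>x. x + _"]) (rule sum.cong; auto simp: lookup_add)
qed

lemma fiber_coeff_zero [simp]: "fiber_coeff \<Phi> c 0 = 0"
  by (simp add: fiber_coeff_def)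

lemma fiber_coeff_uminus: "fiber_coeff \<Phi> c (- p) = - fiber_coeff \<Phi> c p"
  unfolding fiber_coeff_def keys_minus sum_negf[symmetric] by (rule sum.cong) auto

lemma fiber_coeff_diff: "fiber_coeff \<Phi> c (p - q) = fiber_coeff \<Phi> c p - fiber_coeff \<Phi> c q"
  using fiber_coeff_add[of \<Phi> c p "- q"] fiber_coeff_uminus[of \<Phi> c q] by simp

lemma fiber_coeff_sum: "fiber_coeff \<Phi> c (\<Sum>i\<in>I. f i) = (\<Sum>i\<in>I. fiber_coeff \<Phi> c (f i))"
  by (induction I rule: infinite_finite_induct) (auto simp: fiber_coeff_add)

lemma fiber_coeff_single: "fiber_coeff \<Phi> c (Poly_Mapping.single \<rho> r) = (if \<Phi> \<rho> = c then r else 0)"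
  by (auto simp: fiber_coeff_def)

lemma fiber_coeff_mult_mono:
  "fiber_coeff \<Phi> c (p * mono u) =
     (\<Sum>\<rho>\<in>Poly_Mapping.keys p. if \<Phi> (\<rho> + u) = c then Poly_Mapping.lookup p \<rho> else 0)"
proof -
  have "p * mono u = (\<Sum>\<rho>\<in>Poly_Mapping.keys p. Poly_Mapping.single (\<rho> + u) (Poly_Mapping.lookup p \<rho>))"
    by (subst poly_mapping_sum_single[of p]) (simp add: sum_distrib_right mono_def mult_single)
  then show ?thesis by (simp add: fiber_coeff_sum fiber_coeff_single)
qed

definition binomials :: "((var \<Rightarrow>\<^sub>0 nat) \<times> (var \<Rightarrow>\<^sub>0 nat)) set \<Rightarrow> 'k::field mpoly set" where
  "binomials P = (\<lambda>(u, v). mono u - mono v) ` P"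

lemma fiber_coeff_ideal_gen_eq_0:
  assumes h: "h \<in> ideal_gen m (mono ` M \<union> binomials P)"
    and mon: "\<And>\<nu> g. Poly_Mapping.keys \<nu> \<subseteq> vars m \<Longrightarrow> g \<in> M \<Longrightarrow> \<Phi> (\<nu> + g) \<noteq> c"
    and bin: "\<And>\<nu> u v. Poly_Mapping.keys \<nu> \<subseteq> vars m \<Longrightarrow> (u, v) \<in> P \<Longrightarrow> \<Phi> (\<nu> + u) = \<Phi> (\<nu> + v)"
  shows "fiber_coeff \<Phi> c (h :: 'k::field mpoly) = 0"
proof -
  obtain F d where F: "F \<subseteq> mono ` M \<union> binomials P" "\<And>g. g \<in> F \<Longrightarrow> d g \<in> Sring m"
    and h_eq: "h = (\<Sum>g\<in>F. d g * g)"
    using h by (elim ideal_genE) blast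
  have "fiber_coeff \<Phi> c (d x * x) = 0" if "x \<in> F" for x
  proof -
    have d_keys: "\<rho> \<in> Poly_Mapping.keys (d x) \<Longrightarrow> Poly_Mapping.keys \<rho> \<subseteq> vars m" for \<rho>
      using SringD F(2) that by blast
    from that F(1) consider g where "g \<in> M" "x = mono g"
      | u v where "(u, v) \<in> P" "x = mono u - mono v"
      unfolding binomials_def by auto
    then show ?thesis
    proof cases
      case 1
      then show ?thesis using mon d_keys by (simp add: fiber_coeff_mult_mono)
    next
      case 2
      have "fiber_coeff \<Phi> c (d x * mono u) = fiber_coeff \<Phi> c (d x * mono v)"
        unfolding fiber_coeff_mult_mono using bin[OF d_keys 2(1)] by (intro sum.cong) auto
      then show ?thesis using 2(2) by (simp add: right_diff_distrib fiber_coeff_diff)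
    qed
  qed
  then show ?thesis unfolding h_eq fiber_coeff_sum by simp
qed

lemma T_in_vars [simp]: "T i \<in> vars m \<longleftrightarrow> 1 \<le> i \<and> i \<le> m"
  by (auto simp: vars_def)

lemma X_in_vars [simp]: "X i \<in> vars m \<longleftrightarrow> 1 \<le> i \<and> i \<le> m + 1"
  by (auto simp: vars_def)

lemma finite_vars [simp]: "finite (vars m)"
proof -
  have "vars m \<subseteq> T ` {1..m} \<union> X ` {1..m+1}" by (auto simp: vars_def)
  then show ?thesis by (rule finite_subset) simp
qed

lemma rank_inj: "u \<in> vars m \<Longrightarrow> v \<in> vars m \<Longrightarrow> rank m u = rank m v \<Longrightarrow> u = v"
  by (cases u; cases v) auto

lemma lex_less_irrefl: "\<not> lex_less m \<alpha> \<alpha>"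
  by (auto simp: lex_less_def)

lemma lex_less_trans:
  assumes "lex_less m \<alpha> \<beta>" "lex_less m \<beta> \<gamma>"
  shows "lex_less m \<alpha> \<gamma>"
proof -
  obtain v1 where v1: "v1 \<in> vars m" "Poly_Mapping.lookup \<alpha> v1 < Poly_Mapping.lookup \<beta> v1"
    "\<forall>u\<in>vars m. rank m v1 < rank m u \<longrightarrow> Poly_Mapping.lookup \<alpha> u = Poly_Mapping.lookup \<beta> u"
    using assms(1) unfolding lex_less_def by blast
  obtain v2 where v2: "v2 \<in> vars m" "Poly_Mapping.lookup \<beta> v2 < Poly_Mapping.lookup \<gamma> v2"
    "\<forall>u\<in>vars m. rank m v2 < rank m u \<longrightarrow> Poly_Mapping.lookup \<beta> u = Poly_Mapping.lookup \<gamma> u"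
    using assms(2) unfolding lex_less_def by blast
  consider "v1 = v2" | "rank m v1 < rank m v2" | "rank m v2 < rank m v1"
    using rank_inj[OF v1(1) v2(1)] by linarith
  then show ?thesis
  proof cases
    case 1
    then show ?thesis using v1 v2 unfolding lex_less_def by (intro bexI[of _ v1]) auto
  next
    case 2
    then show ?thesis using v1 v2 unfolding lex_less_def by (intro bexI[of _ v2]) (auto dest: less_trans)
  next
    case 3
    then show ?thesis using v1 v2 unfolding lex_less_def by (intro bexI[of _ v1]) (auto dest: less_trans)
  qed
qed

lemma lex_less_asym: "lex_less m \<alpha> \<beta> \<Longrightarrow> \<not> lex_less m \<beta> \<alpha>"
  using lex_less_trans lex_less_irrefl by blast

lemma lex_less_add_left: "lex_less m v u \<Longrightarrow> lex_less m (\<nu> + v) (\<nu> + u)"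
  unfolding lex_less_def by (auto simp: lookup_add)

lemma lex_less_total:
  assumes "Poly_Mapping.keys \<alpha> \<subseteq> vars m" "Poly_Mapping.keys \<beta> \<subseteq> vars m" "\<alpha> \<noteq> \<beta>"
  shows "lex_less m \<alpha> \<beta> \<or> lex_less m \<beta> \<alpha>"
proof -
  define D where "D = {v\<in>vars m. Poly_Mapping.lookup \<alpha> v \<noteq> Poly_Mapping.lookup \<beta> v}"
  have finD: "finite D" unfolding D_def by simp
  have "D \<noteq> {}"
  proof
    assume "D = {}"
    have "Poly_Mapping.lookup \<alpha> v = Poly_Mapping.lookup \<beta> v" for v
    proof (cases "v \<in> vars m")
      case True then show ?thesis using \<open>D = {}\<close> unfolding D_def by blast
    next
      case False
      then have "v \<notin> Poly_Mapping.keys \<alpha>" "v \<notin> Poly_Mapping.keys \<beta>" using assms(1,2) by blast+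
      then show ?thesis by (simp add: in_keys_iff)
    qed
    then show False using assms(3) by (simp add: poly_mapping_eqI)
  qed
  then obtain v where v: "v \<in> D" "rank m v = Max (rank m ` D)"
    using Max_in[of "rank m ` D"] finD by (metis (no_types, lifting) empty_is_image finite_imageI imageE)
  have "Poly_Mapping.lookup \<alpha> u = Poly_Mapping.lookup \<beta> u" if "u \<in> vars m" "rank m v < rank m u" for u
  proof (rule ccontr)
    assume "Poly_Mapping.lookup \<alpha> u \<noteq> Poly_Mapping.lookup \<beta> u"
    then have "rank m u \<le> rank m v" using that(1) v(2) finD unfolding D_def by simp
    then show False using that(2) by simp
  qed
  moreover have "v \<in> vars m" "Poly_Mapping.lookup \<alpha> v \<noteq> Poly_Mapping.lookup \<beta> v"
    using v(1) unfolding D_def by auto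
  ultimately show ?thesis unfolding lex_less_def by (metis linorder_neqE_nat)
qed

lemma lex_less_ex_max:
  assumes "finite A" "A \<noteq> {}" "\<And>\<alpha>. \<alpha> \<in> A \<Longrightarrow> Poly_Mapping.keys \<alpha> \<subseteq> vars m"
  shows "\<exists>\<mu>\<in>A. \<forall>\<beta>\<in>A. \<beta> \<noteq> \<mu> \<longrightarrow> lex_less m \<beta> \<mu>"
  using assms
proof (induction A rule: finite_ne_induct)
  case (singleton x)
  then show ?case by auto
next
  case (insert x F)
  then obtain \<mu> where \<mu>: "\<mu> \<in> F" "\<forall>\<beta>\<in>F. \<beta> \<noteq> \<mu> \<longrightarrow> lex_less m \<beta> \<mu>" by auto
  have "x \<noteq> \<mu>" using insert.hyps \<mu>(1) by auto
  then have "lex_less m x \<mu> \<or> lex_less m \<mu> x"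
    using lex_less_total[of x m \<mu>] insert.prems \<mu>(1) by auto
  then show ?case
  proof
    assume "lex_less m x \<mu>" then show ?thesis using \<mu> by auto
  next
    assume "lex_less m \<mu> x" then show ?thesis using \<mu> lex_less_trans by (intro bexI[of _ x]) auto
  qed
qed

lemma lead_exp_eqI:
  assumes "\<mu> \<in> Poly_Mapping.keys p" "\<And>\<beta>. \<beta> \<in> Poly_Mapping.keys p \<Longrightarrow> \<beta> \<noteq> \<mu> \<Longrightarrow> lex_less m \<beta> \<mu>"
  shows "lead_exp m p = \<mu>"
  unfolding lead_exp_def
proof (rule the_equality)
  show "\<mu> \<in> Poly_Mapping.keys p \<and> (\<forall>\<beta>\<in>Poly_Mapping.keys p. \<beta> \<noteq> \<mu> \<longrightarrow> lex_less m \<beta> \<mu>)"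
    using assms by blast
  fix \<alpha> assume \<alpha>: "\<alpha> \<in> Poly_Mapping.keys p \<and> (\<forall>\<beta>\<in>Poly_Mapping.keys p. \<beta> \<noteq> \<alpha> \<longrightarrow> lex_less m \<beta> \<alpha>)"
  show "\<alpha> = \<mu>"
  proof (rule ccontr)
    assume "\<alpha> \<noteq> \<mu>"
    then have "lex_less m \<mu> \<alpha>" "lex_less m \<alpha> \<mu>" using \<alpha> assms by auto
    then show False using lex_less_asym by blast
  qed
qed

lemma lead_exp_spec:
  assumes "p \<in> Sring m" "p \<noteq> 0"
  shows "lead_exp m p \<in> Poly_Mapping.keys p"
    and "\<And>\<beta>. \<beta> \<in> Poly_Mapping.keys p \<Longrightarrow> \<beta> \<noteq> lead_exp m p \<Longrightarrow> lex_less m \<beta> (lead_exp m p)"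
proof -
  obtain \<mu> where "\<mu> \<in> Poly_Mapping.keys p" "\<forall>\<beta>\<in>Poly_Mapping.keys p. \<beta> \<noteq> \<mu> \<longrightarrow> lex_less m \<beta> \<mu>"
    using lex_less_ex_max[of "Poly_Mapping.keys p" m] assms SringD[OF assms(1)] by auto
  moreover from this have "lead_exp m p = \<mu>" by (intro lead_exp_eqI) auto
  ultimately show "lead_exp m p \<in> Poly_Mapping.keys p"
    and "\<And>\<beta>. \<beta> \<in> Poly_Mapping.keys p \<Longrightarrow> \<beta> \<noteq> lead_exp m p \<Longrightarrow> lex_less m \<beta> (lead_exp m p)"
    by auto
qed

lemma lead_exp_binomial:
  assumes "lex_less m v u"
  shows "lead_exp m (mono u - mono v :: 'k::field mpoly) = u"
proof -
  have "u \<noteq> v" using assms lex_less_irrefl by blast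
  then have "Poly_Mapping.keys (mono u - mono v :: 'k mpoly) = {u, v}"
    by (auto simp: in_keys_iff lookup_minus lookup_mono split: if_splits)
  then show ?thesis using assms by (intro lead_exp_eqI) auto
qed

section \<open>Binomial ideals given by confluent rewrite rules\<close>

definition rewrite :: "(('a \<Rightarrow>\<^sub>0 nat) \<times> ('a \<Rightarrow>\<^sub>0 nat)) set \<Rightarrow> ('a \<Rightarrow>\<^sub>0 nat) \<Rightarrow> ('a \<Rightarrow>\<^sub>0 nat) \<Rightarrow> bool" where
  "rewrite R \<alpha> \<beta> \<longleftrightarrow> (\<exists>\<nu> u v. (u, v) \<in> R \<and> \<alpha> = \<nu> + u \<and> \<beta> = \<nu> + v)"

lemma rewriteI: "(u, v) \<in> R \<Longrightarrow> exp_dvd u \<alpha> \<Longrightarrow> \<alpha> - u + v = \<beta> \<Longrightarrow> rewrite R \<alpha> \<beta>"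
  unfolding rewrite_def by (metis exp_dvd_diff_add)

lemma rewriteE:
  assumes "rewrite R \<alpha> \<beta>"
  obtains u v where "(u, v) \<in> R" "exp_dvd u \<alpha>" "\<beta> = \<alpha> - u + v"
  using assms exp_dvd_add unfolding rewrite_def by fastforce

lemma rewrite_lex_less:
  "(\<And>u v. (u, v) \<in> R \<Longrightarrow> lex_less m v u) \<Longrightarrow> rewrite R \<alpha> \<beta> \<Longrightarrow> lex_less m \<beta> \<alpha>"
  unfolding rewrite_def using lex_less_add_left by blast

lemma rtranclp_rewrite_lex_less:
  assumes "\<And>u v. (u, v) \<in> R \<Longrightarrow> lex_less m v u" "(rewrite R)\<^sup>*\<^sup>* \<alpha> \<beta>" "\<alpha> \<noteq> \<beta>"
  shows "lex_less m \<beta> \<alpha>"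
proof -
  have "\<alpha> = \<beta> \<or> lex_less m \<beta> \<alpha>"
    using assms(2)
  proof (induction rule: rtranclp_induct)
    case (step \<beta> \<gamma>)
    then show ?case using rewrite_lex_less[OF assms(1)] lex_less_trans by blast
  qed simp
  then show ?thesis using assms(3) by blast
qed

lemma equivclp_into_irreducible:
  assumes "confluentp r" "equivclp r x y" "\<nexists>z. r y z"
  shows "r\<^sup>*\<^sup>* x y"
proof -
  have "(r\<^sup>*\<^sup>* OO r\<inverse>\<inverse>\<^sup>*\<^sup>*) x y"
    using assms(2) semiconfluentp_equivclp[OF confluentp_imp_semiconfluentp[OF assms(1)]] by simp
  then obtain w where "r\<^sup>*\<^sup>* x w" "r\<^sup>*\<^sup>* y w"
    by (auto simp: rtranclp_conversep)
  moreover from \<open>r\<^sup>*\<^sup>* y w\<close> have "w = y"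
    using assms(3) by (cases rule: converse_rtranclpE) auto
  ultimately show ?thesis by simp
qed

text \<open>If the rules decrease in the order and rewriting is confluent, every leading exponent in the
  binomial ideal is reducible: otherwise the sum of the coefficients of \<open>h\<close> over the rewriting class of
  its leading exponent would be both zero and the leading coefficient.\<close>

lemma lead_exp_reducible:
  assumes lex: "\<And>u v. (u, v) \<in> R \<Longrightarrow> lex_less m v u"
    and conf: "confluentp (rewrite R)"
    and h: "h \<in> ideal_gen m (binomials R)" "h \<in> Sring m" "h \<noteq> (0 :: 'k::field mpoly)"
  shows "\<exists>\<beta>. rewrite R (lead_exp m h) \<beta>"
proof (rule ccontr)
  let ?lead = "lead_exp m h"
  let ?cls = "\<lambda>\<rho>. Collect (equivclp (rewrite R) \<rho>)"
  assume irreducible: "\<nexists>\<beta>. rewrite R ?lead \<beta>"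
  have lead_only: "\<rho> = ?lead" if "\<rho> \<in> Poly_Mapping.keys h" "?cls \<rho> = ?cls ?lead" for \<rho>
  proof (rule ccontr)
    assume ne: "\<rho> \<noteq> ?lead"
    have "?lead \<in> ?cls \<rho>" unfolding that(2) by simp
    then have "equivclp (rewrite R) \<rho> ?lead" by simp
    then have "(rewrite R)\<^sup>*\<^sup>* \<rho> ?lead" using conf irreducible by (intro equivclp_into_irreducible)
    then have "lex_less m ?lead \<rho>" using rtranclp_rewrite_lex_less[OF lex _ ne] by blast
    moreover have "lex_less m \<rho> ?lead" using lead_exp_spec(2)[OF h(2,3) that(1) ne] .
    ultimately show False using lex_less_asym by blast
  qed
  have "fiber_coeff ?cls (?cls ?lead) h = 0"
  proof (rule fiber_coeff_ideal_gen_eq_0[where M = "{}"])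
    show "h \<in> ideal_gen m (mono ` {} \<union> binomials R)" using h(1) by simp
    show "?cls (\<nu> + u) = ?cls (\<nu> + v)" if "(u, v) \<in> R" for \<nu> u v
    proof -
      have "rewrite R (\<nu> + u) (\<nu> + v)" using that unfolding rewrite_def by blast
      then have eqv: "equivclp (rewrite R) (\<nu> + u) (\<nu> + v)" by (rule r_into_equivclp)
      show ?thesis
      proof (intro Collect_cong iffI)
        fix \<rho> assume "equivclp (rewrite R) (\<nu> + u) \<rho>"
        then show "equivclp (rewrite R) (\<nu> + v) \<rho>" by (rule equivclp_trans[OF equivclp_sym[OF eqv]])
      next
        fix \<rho> assume "equivclp (rewrite R) (\<nu> + v) \<rho>"
        then show "equivclp (rewrite R) (\<nu> + u) \<rho>" by (rule equivclp_trans[OF eqv])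
      qed
    qed
  qed simp
  moreover have "fiber_coeff ?cls (?cls ?lead) h = Poly_Mapping.lookup h ?lead"
  proof -
    have "(\<Sum>\<rho>\<in>Poly_Mapping.keys h - {?lead}. if ?cls \<rho> = ?cls ?lead then Poly_Mapping.lookup h \<rho> else 0) = 0"
    proof (intro sum.neutral ballI)
      fix \<rho> assume "\<rho> \<in> Poly_Mapping.keys h - {?lead}"
      then show "(if ?cls \<rho> = ?cls ?lead then Poly_Mapping.lookup h \<rho> else 0) = 0"
        using lead_only[of \<rho>] by auto
    qed
    then show ?thesis
      unfolding fiber_coeff_def by (simp add: sum.remove[OF finite_keys lead_exp_spec(1)[OF h(2,3)]])
  qed
  ultimately show False using lead_exp_spec(1)[OF h(2,3)] by (simp add: in_keys_iff)
qed

theorem initial_ideal_binomials: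
  assumes keys: "\<And>u v. (u, v) \<in> R \<Longrightarrow> Poly_Mapping.keys u \<subseteq> vars m \<and> Poly_Mapping.keys v \<subseteq> vars m"
    and lex: "\<And>u v. (u, v) \<in> R \<Longrightarrow> lex_less m v u"
    and conf: "confluentp (rewrite R)"
  shows "initial_ideal m (ideal_gen m (binomials R) :: 'k::field mpoly set) = ideal_gen m (mono ` fst ` R)"
proof
  have "binomials R \<subseteq> (Sring m :: 'k mpoly set)"
    using keys unfolding binomials_def by (auto intro!: Sring_diff Sring_mono)
  then have binomials_Sring: "ideal_gen m (binomials R :: 'k mpoly set) \<subseteq> Sring m"
    by (rule ideal_gen_subset_Sring)
  show "initial_ideal m (ideal_gen m (binomials R)) \<subseteq> ideal_gen m (mono ` fst ` R :: 'k mpoly set)"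
    unfolding initial_ideal_def
  proof (rule ideal_gen_subset, rule subsetI)
    fix x :: "'k mpoly"
    assume "x \<in> {mono (lead_exp m p) |p :: 'k mpoly. p \<in> ideal_gen m (binomials R) \<and> p \<noteq> 0}"
    then obtain p :: "'k mpoly" where x: "x = mono (lead_exp m p)"
      and p: "p \<in> ideal_gen m (binomials R)" "p \<noteq> 0"
      by blast
    have pS: "p \<in> Sring m" using p(1) binomials_Sring by blast
    obtain \<beta> where "rewrite R (lead_exp m p) \<beta>" using lead_exp_reducible[OF lex conf p(1) pS p(2)] by blast
    then obtain \<nu> u v where uv: "(u, v) \<in> R" and lead: "lead_exp m p = \<nu> + u"
      unfolding rewrite_def by blast
    have "Poly_Mapping.keys \<nu> \<subseteq> vars m"
      using SringD[OF pS lead_exp_spec(1)[OF pS p(2)]] lead by (simp add: keys_add_nat)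
    moreover have "mono u \<in> ideal_gen m (mono ` fst ` R :: 'k mpoly set)"
      using uv by (intro ideal_gen_gen) force
    ultimately show "x \<in> ideal_gen m (mono ` fst ` R)"
      unfolding x lead by (rule mono_mult_mem_ideal_gen)
  qed
  show "ideal_gen m (mono ` fst ` R) \<subseteq> initial_ideal m (ideal_gen m (binomials R) :: 'k mpoly set)"
    unfolding initial_ideal_def
  proof (rule ideal_gen_mono, rule subsetI)
    fix x :: "'k mpoly" assume "x \<in> mono ` fst ` R"
    then obtain u v where uv: "(u, v) \<in> R" and x: "x = mono u" by auto
    let ?p = "mono u - mono v :: 'k mpoly"
    have "?p \<in> ideal_gen m (binomials R)"
      using uv unfolding binomials_def by (intro ideal_gen_gen) force
    moreover have "lead_exp m ?p = u"
      using lex[OF uv] by (rule lead_exp_binomial)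
    then have "x = mono (lead_exp m ?p)" using x by simp
    moreover have "?p \<noteq> 0"
    proof -
      have "u \<noteq> v" using lex[OF uv] lex_less_irrefl by blast
      then have "Poly_Mapping.lookup ?p u = 1" by (simp add: lookup_minus lookup_mono)
      then show ?thesis by auto
    qed
    ultimately show "x \<in> {mono (lead_exp m p) |p :: 'k mpoly. p \<in> ideal_gen m (binomials R) \<and> p \<noteq> 0}"
      by blast
  qed
qed

definition exp_XT :: "(nat \<Rightarrow> nat) \<Rightarrow> nat \<Rightarrow> nat \<Rightarrow> (var \<Rightarrow>\<^sub>0 nat)" where
  "exp_XT a j i = Poly_Mapping.single (T j) (a j) + Poly_Mapping.single (X i) 1"

definition exp_WT :: "nat \<Rightarrow> (nat \<Rightarrow> nat) \<Rightarrow> (nat \<Rightarrow> nat) \<Rightarrow> nat \<Rightarrow> (var \<Rightarrow>\<^sub>0 nat)" where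
  "exp_WT m a b j = Poly_Mapping.single (T j) (a j - b j) + Poly_Mapping.single (X (m + 1)) 1"

definition exp_XTb :: "nat \<Rightarrow> (nat \<Rightarrow> nat) \<Rightarrow> nat \<Rightarrow> (var \<Rightarrow>\<^sub>0 nat)" where
  "exp_XTb m b j = (\<Sum>l\<in>{1..m} - {j}. Poly_Mapping.single (T l) (b l)) + Poly_Mapping.single (X j) 1"

lemma lookup_exp_XT [simp]:
  "Poly_Mapping.lookup (exp_XT a j i) (T l) = (if l = j then a j else 0)"
  "Poly_Mapping.lookup (exp_XT a j i) (X n) = (if n = i then 1 else 0)"
  by (simp_all add: exp_XT_def lookup_add lookup_single)

lemma lookup_exp_WT [simp]:
  "Poly_Mapping.lookup (exp_WT m a b j) (T l) = (if l = j then a j - b j else 0)"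
  "Poly_Mapping.lookup (exp_WT m a b j) (X n) = (if n = m + 1 then 1 else 0)"
  by (simp_all add: exp_WT_def lookup_add lookup_single)

lemma lookup_exp_XTb [simp]:
  "Poly_Mapping.lookup (exp_XTb m b j) (T l) = (if 1 \<le> l \<and> l \<le> m \<and> l \<noteq> j then b l else 0)"
  "Poly_Mapping.lookup (exp_XTb m b j) (X n) = (if n = j then 1 else 0)"
  by (simp_all add: exp_XTb_def lookup_add lookup_sum lookup_single when_def sum.delta)

lemma keys_exp_XT: "Poly_Mapping.keys (exp_XT a j i) \<subseteq> {T j, X i}"
proof
  fix x assume "x \<in> Poly_Mapping.keys (exp_XT a j i)"
  then show "x \<in> {T j, X i}" by (cases x) (auto simp: in_keys_iff split: if_splits)
qed

lemma keys_exp_WT: "Poly_Mapping.keys (exp_WT m a b j) \<subseteq> {T j, X (m + 1)}"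
proof
  fix x assume "x \<in> Poly_Mapping.keys (exp_WT m a b j)"
  then show "x \<in> {T j, X (m + 1)}" by (cases x) (auto simp: in_keys_iff split: if_splits)
qed

lemma keys_exp_XTb: "Poly_Mapping.keys (exp_XTb m b j) \<subseteq> T ` {1..m} \<union> {X j}"
proof
  fix x assume "x \<in> Poly_Mapping.keys (exp_XTb m b j)"
  then show "x \<in> T ` {1..m} \<union> {X j}" by (cases x) (auto simp: in_keys_iff split: if_splits)
qed

definition rules :: "nat \<Rightarrow> (nat \<Rightarrow> nat) \<Rightarrow> (nat \<Rightarrow> nat) \<Rightarrow> ((var \<Rightarrow>\<^sub>0 nat) \<times> (var \<Rightarrow>\<^sub>0 nat)) set" where
  "rules m a b = {(exp_XT a j i, exp_XT a i j) | i j. 1 \<le> j \<and> j < i \<and> i \<le> m}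
     \<union> {(exp_WT m a b j, exp_XTb m b j) | j. 1 \<le> j \<and> j \<le> m}"

lemma rules_XI: "1 \<le> j \<Longrightarrow> j < i \<Longrightarrow> i \<le> m \<Longrightarrow> (exp_XT a j i, exp_XT a i j) \<in> rules m a b"
  unfolding rules_def by blast

lemma rules_WI: "1 \<le> j \<Longrightarrow> j \<le> m \<Longrightarrow> (exp_WT m a b j, exp_XTb m b j) \<in> rules m a b"
  unfolding rules_def by blast

lemma rulesE:
  assumes "(u, v) \<in> rules m a b"
  obtains (X) i j where "1 \<le> j" "j < i" "i \<le> m" "u = exp_XT a j i" "v = exp_XT a i j"
    | (W) j where "1 \<le> j" "j \<le> m" "u = exp_WT m a b j" "v = exp_XTb m b j"
  using assms unfolding rules_def by blast

lemma keys_rules: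
  assumes "(u, v) \<in> rules m a b"
  shows "Poly_Mapping.keys u \<subseteq> vars m \<and> Poly_Mapping.keys v \<subseteq> vars m"
  using assms
proof (cases rule: rulesE)
  case (X i j)
  then show ?thesis using keys_exp_XT[of a j i] keys_exp_XT[of a i j] by auto
next
  case (W j)
  then show ?thesis using keys_exp_WT[of m a b j] keys_exp_XTb[of m b j] by auto
qed

lemma lex_less_rules: "(u, v) \<in> rules m a b \<Longrightarrow> lex_less m v u"
proof (erule rulesE)
  fix i j assume ij: "1 \<le> j" "j < i" "i \<le> m" "u = exp_XT a j i" "v = exp_XT a i j"
  show "lex_less m v u"
    unfolding lex_less_def
  proof (intro bexI[of _ "X i"] conjI ballI impI)
    fix w assume "w \<in> vars m" "rank m (X i) < rank m w"
    then show "Poly_Mapping.lookup v w = Poly_Mapping.lookup u w" using ij by (cases w) auto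
  qed (use ij in auto)
next
  fix j assume j: "1 \<le> j" "j \<le> m" "u = exp_WT m a b j" "v = exp_XTb m b j"
  show "lex_less m v u"
    unfolding lex_less_def
  proof (intro bexI[of _ "X (m + 1)"] conjI ballI impI)
    fix w assume "w \<in> vars m" "rank m (X (m + 1)) < rank m w"
    then show "Poly_Mapping.lookup v w = Poly_Mapping.lookup u w" using j by (cases w) auto
  qed (use j in auto)
qed

lemma lookup_psi_exp: "Poly_Mapping.lookup (psi_exp m a b \<alpha>) v =
  (case v of T l \<Rightarrow> if 1 \<le> l \<and> l \<le> m then Poly_Mapping.lookup \<alpha> (T l) + a l * Poly_Mapping.lookup \<alpha> (X l)
        + b l * Poly_Mapping.lookup \<alpha> (X (m + 1)) else 0 | X _ \<Rightarrow> 0)"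
  by (cases v) (simp_all add: psi_exp_def lookup_sum lookup_single when_def sum.delta)

lemma lookup_gcd_exp: "Poly_Mapping.lookup (gcd_exp f g) v = min (Poly_Mapping.lookup f v) (Poly_Mapping.lookup g v)"
  by (simp add: gcd_exp.rep_eq)

lemma Pbin_X_X:
  assumes "1 \<le> j" "j < i" "i \<le> m"
  shows "Pbin m a b (varexp (X i)) (varexp (X j)) = (mono (exp_XT a j i) - mono (exp_XT a i j) :: 'k::field mpoly)"
proof -
  let ?p = "psi_exp m a b (varexp (X i))" and ?q = "psi_exp m a b (varexp (X j))"
  have "?q - gcd_exp ?p ?q + varexp (X i) = exp_XT a j i" "?p - gcd_exp ?p ?q + varexp (X j) = exp_XT a i j"
    by (rule poly_mapping_eqI; use assms in \<open>auto simp: lookup_add lookup_minus lookup_psi_exp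
          lookup_gcd_exp lookup_varexp split: var.split\<close>)+
  then show ?thesis unfolding Pbin_def Let_def mono_mult by simp
qed

lemma Pbin_W_X:
  assumes "1 \<le> j" "j \<le> m" "b j \<le> a j"
  shows "Pbin m a b (varexp (X (m + 1))) (varexp (X j)) = (mono (exp_WT m a b j) - mono (exp_XTb m b j) :: 'k::field mpoly)"
proof -
  let ?p = "psi_exp m a b (varexp (X (m + 1)))" and ?q = "psi_exp m a b (varexp (X j))"
  have "?q - gcd_exp ?p ?q + varexp (X (m + 1)) = exp_WT m a b j" "?p - gcd_exp ?p ?q + varexp (X j) = exp_XTb m b j"
    by (rule poly_mapping_eqI; use assms in \<open>auto simp: lookup_add lookup_minus lookup_psi_exp
          lookup_gcd_exp lookup_varexp split: var.split\<close>)+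
  then show ?thesis unfolding Pbin_def Let_def mono_mult by simp
qed

lemma Gamma0_eq_binomials_rules:
  assumes ab: "\<forall>l\<in>{1..m}. b l \<le> a l"
  shows "Gamma0 m a b = binomials (rules m a b)"
proof
  show "Gamma0 m a b \<subseteq> binomials (rules m a b)"
  proof
    fix p assume "p \<in> Gamma0 m a b"
    then obtain i j where p: "p = Pbin m a b (varexp (X i)) (varexp (X j))" and ij: "1 \<le> j" "j < i" "i \<le> m + 1"
      unfolding Gamma0_def by blast
    show "p \<in> binomials (rules m a b)"
    proof (cases "i = m + 1")
      case True
      then have "p = mono (exp_WT m a b j) - mono (exp_XTb m b j)"
        using p ij ab Pbin_W_X[of j m b a] by simp
      then show ?thesis using ij True rules_WI[of j m a b] unfolding binomials_def by force
    next
      case False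
      then have "p = mono (exp_XT a j i) - mono (exp_XT a i j)"
        using p ij Pbin_X_X[of j i m a b] by simp
      then show ?thesis using ij False rules_XI[of j i m a b] unfolding binomials_def by force
    qed
  qed
  show "binomials (rules m a b) \<subseteq> Gamma0 m a b"
  proof
    fix p assume "p \<in> binomials (rules m a b)"
    then obtain u v where uv: "(u, v) \<in> rules m a b" and p: "p = mono u - mono v"
      unfolding binomials_def by auto
    from uv show "p \<in> Gamma0 m a b"
    proof (cases rule: rulesE)
      case (X i j)
      then have "p = Pbin m a b (varexp (X i)) (varexp (X j))"
        unfolding p by (subst Pbin_X_X) auto
      then show ?thesis unfolding Gamma0_def using X by (intro CollectI exI[of _ i] exI[of _ j]) auto
    next
      case (W j)
      then have "p = Pbin m a b (varexp (X (m + 1))) (varexp (X j))"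
        unfolding p using W ab by (subst Pbin_W_X) auto
      then show ?thesis unfolding Gamma0_def using W by (intro CollectI exI[of _ "m + 1"] exI[of _ j]) auto
    qed
  qed
qed

section \<open>Confluence of the rules\<close>

lemma rewrite_by_lookupI:
  fixes u v \<alpha> \<beta> :: "var \<Rightarrow>\<^sub>0 nat"
  assumes rule: "(u, v) \<in> R"
    and T: "\<And>l. Poly_Mapping.lookup u (T l) \<le> Poly_Mapping.lookup \<alpha> (T l) \<and>
      Poly_Mapping.lookup \<beta> (T l) + Poly_Mapping.lookup u (T l) = Poly_Mapping.lookup \<alpha> (T l) + Poly_Mapping.lookup v (T l)"
    and X: "\<And>n. Poly_Mapping.lookup u (X n) \<le> Poly_Mapping.lookup \<alpha> (X n) \<and>
      Poly_Mapping.lookup \<beta> (X n) + Poly_Mapping.lookup u (X n) = Poly_Mapping.lookup \<alpha> (X n) + Poly_Mapping.lookup v (X n)"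
  shows "rewrite R \<alpha> \<beta>"
proof (rule rewriteI[OF rule])
  have pointwise: "Poly_Mapping.lookup u x \<le> Poly_Mapping.lookup \<alpha> x \<and>
      Poly_Mapping.lookup \<beta> x + Poly_Mapping.lookup u x = Poly_Mapping.lookup \<alpha> x + Poly_Mapping.lookup v x" for x
    using T X by (cases x) auto
  then show "exp_dvd u \<alpha>" by (simp add: exp_dvd_def)
  show "\<alpha> - u + v = \<beta>"
  proof (rule poly_mapping_eqI)
    fix x show "Poly_Mapping.lookup (\<alpha> - u + v) x = Poly_Mapping.lookup \<beta> x"
      using pointwise[of x] by (simp add: lookup_add lookup_minus) linarith
  qed
qed

lemma rewrite_commute_disjoint:
  assumes r2: "(u2, v2) \<in> R" and d2: "exp_dvd u2 \<alpha>"
    and disjoint: "\<And>x. Poly_Mapping.lookup u1 x = 0 \<or> Poly_Mapping.lookup u2 x = 0"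
  shows "rewrite R (\<alpha> - u1 + v1) (\<alpha> - u1 + v1 - u2 + v2)"
proof (rule rewriteI[OF r2 exp_dvdI])
  show "Poly_Mapping.lookup u2 x \<le> Poly_Mapping.lookup (\<alpha> - u1 + v1) x" for x
    using exp_dvdD[OF d2, of x] disjoint[of x] by (auto simp: lookup_add lookup_minus)
qed simp

definition joinable :: "('a \<Rightarrow> 'a \<Rightarrow> bool) \<Rightarrow> 'a \<Rightarrow> 'a \<Rightarrow> bool" where
  "joinable r x y \<longleftrightarrow> (\<exists>z. r\<^sup>=\<^sup>= x z \<and> r\<^sup>=\<^sup>= y z)"

lemma joinable_sym: "joinable r x y \<Longrightarrow> joinable r y x"
  unfolding joinable_def by blast

lemma joinableI_step: "x = y \<or> r x y \<or> r y x \<Longrightarrow> joinable r x y"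
  unfolding joinable_def by blast

lemma joinable_rewrite_disjoint:
  assumes r1: "(u1, v1) \<in> R" and r2: "(u2, v2) \<in> R" and d1: "exp_dvd u1 \<alpha>" and d2: "exp_dvd u2 \<alpha>"
    and disjoint: "\<And>x. Poly_Mapping.lookup u1 x = 0 \<or> Poly_Mapping.lookup u2 x = 0"
  shows "joinable (rewrite R) (\<alpha> - u1 + v1) (\<alpha> - u2 + v2)"
proof -
  have "\<alpha> - u2 + v2 - u1 + v1 = \<alpha> - u1 + v1 - u2 + v2"
  proof (rule poly_mapping_eqI)
    fix x show "Poly_Mapping.lookup (\<alpha> - u2 + v2 - u1 + v1) x = Poly_Mapping.lookup (\<alpha> - u1 + v1 - u2 + v2) x"
      using exp_dvdD[OF d1, of x] exp_dvdD[OF d2, of x] disjoint[of x] by (auto simp: lookup_add lookup_minus)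
  qed
  moreover have "rewrite R (\<alpha> - u2 + v2) (\<alpha> - u2 + v2 - u1 + v1)"
    using r1 d1 disjoint[THEN disj_commute[THEN iffD1]] by (rule rewrite_commute_disjoint)
  ultimately show ?thesis
    using rewrite_commute_disjoint[OF r2 d2 disjoint] unfolding joinable_def by auto
qed

lemma critical_pair_X_X_same_X:
  assumes "1 \<le> j1" "j1 < j2" "j2 < i" "i \<le> m"
    and "a j1 \<le> Poly_Mapping.lookup \<alpha> (T j1)" "a j2 \<le> Poly_Mapping.lookup \<alpha> (T j2)"
    and "1 \<le> Poly_Mapping.lookup \<alpha> (X i)"
  shows "rewrite (rules m a b) (\<alpha> - exp_XT a j2 i + exp_XT a i j2) (\<alpha> - exp_XT a j1 i + exp_XT a i j1)"
  using assms by (intro rewrite_by_lookupI[OF rules_XI[of j1 j2]]) (auto simp: lookup_add lookup_minus)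

lemma critical_pair_X_X_same_T:
  assumes "1 \<le> j" "j < i2" "i2 < i1" "i1 \<le> m"
    and "a j \<le> Poly_Mapping.lookup \<alpha> (T j)"
    and "1 \<le> Poly_Mapping.lookup \<alpha> (X i1)" "1 \<le> Poly_Mapping.lookup \<alpha> (X i2)"
  shows "rewrite (rules m a b) (\<alpha> - exp_XT a j i2 + exp_XT a i2 j) (\<alpha> - exp_XT a j i1 + exp_XT a i1 j)"
  using assms by (intro rewrite_by_lookupI[OF rules_XI[of i2 i1]]) (auto simp: lookup_add lookup_minus)

lemma critical_pair_X_W:
  assumes "1 \<le> j" "j < i" "i \<le> m" "b j \<le> a j" "b i \<le> a i"
    and "a j \<le> Poly_Mapping.lookup \<alpha> (T j)"
    and "1 \<le> Poly_Mapping.lookup \<alpha> (X i)" "1 \<le> Poly_Mapping.lookup \<alpha> (X (m + 1))"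
  shows "rewrite (rules m a b) (\<alpha> - exp_XT a j i + exp_XT a i j) (\<alpha> - exp_WT m a b j + exp_XTb m b j)"
  using assms by (intro rewrite_by_lookupI[OF rules_WI[of i]]) (auto simp: lookup_add lookup_minus)

lemma critical_pair_W_W:
  assumes "1 \<le> j1" "j1 < j2" "j2 \<le> m" "b j1 \<le> a j1" "b j2 \<le> a j2"
    and "a j1 - b j1 \<le> Poly_Mapping.lookup \<alpha> (T j1)" "a j2 - b j2 \<le> Poly_Mapping.lookup \<alpha> (T j2)"
    and "1 \<le> Poly_Mapping.lookup \<alpha> (X (m + 1))"
  shows "rewrite (rules m a b) (\<alpha> - exp_WT m a b j2 + exp_XTb m b j2) (\<alpha> - exp_WT m a b j1 + exp_XTb m b j1)"
  using assms by (intro rewrite_by_lookupI[OF rules_XI[of j1 j2]]) (auto simp: lookup_add lookup_minus)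



lemma joinable_X_X:
  assumes ij1: "1 \<le> j1" "j1 < i1" "i1 \<le> m" and ij2: "1 \<le> j2" "j2 < i2" "i2 \<le> m"
    and d1: "exp_dvd (exp_XT a j1 i1) \<alpha>" and d2: "exp_dvd (exp_XT a j2 i2) \<alpha>"
  shows "joinable (rewrite (rules m a b))
    (\<alpha> - exp_XT a j1 i1 + exp_XT a i1 j1) (\<alpha> - exp_XT a j2 i2 + exp_XT a i2 j2)"
proof -
  have \<alpha>: "a j1 \<le> Poly_Mapping.lookup \<alpha> (T j1)" "1 \<le> Poly_Mapping.lookup \<alpha> (X i1)"
      "a j2 \<le> Poly_Mapping.lookup \<alpha> (T j2)" "1 \<le> Poly_Mapping.lookup \<alpha> (X i2)"
    using exp_dvdD[OF d1, of "T j1"] exp_dvdD[OF d1, of "X i1"]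
      exp_dvdD[OF d2, of "T j2"] exp_dvdD[OF d2, of "X i2"] by simp_all
  consider "i1 = i2" "j1 = j2" | "i1 = i2" "j1 < j2" | "i1 = i2" "j2 < j1"
    | "j1 = j2" "i2 < i1" | "j1 = j2" "i1 < i2" | "i1 \<noteq> i2" "j1 \<noteq> j2" by linarith
  then show ?thesis
  proof cases
    case 6
    have "Poly_Mapping.lookup (exp_XT a j1 i1) x = 0 \<or> Poly_Mapping.lookup (exp_XT a j2 i2) x = 0" for x
      using 6 by (cases x) auto
    then show ?thesis using ij1 ij2 d1 d2 by (intro joinable_rewrite_disjoint rules_XI)
  qed (use ij1 ij2 \<alpha> critical_pair_X_X_same_X[of j1 j2 i1 m a \<alpha> b] critical_pair_X_X_same_X[of j2 j1 i1 m a \<alpha> b]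
      critical_pair_X_X_same_T[of j1 i2 i1 m a \<alpha> b] critical_pair_X_X_same_T[of j1 i1 i2 m a \<alpha> b]
      in \<open>auto intro: joinableI_step\<close>)
qed

lemma joinable_X_W:
  assumes ab: "\<forall>l\<in>{1..m}. b l \<le> a l" and ij: "1 \<le> j" "j < i" "i \<le> m" and k: "1 \<le> k" "k \<le> m"
    and d1: "exp_dvd (exp_XT a j i) \<alpha>" and d2: "exp_dvd (exp_WT m a b k) \<alpha>"
  shows "joinable (rewrite (rules m a b))
    (\<alpha> - exp_XT a j i + exp_XT a i j) (\<alpha> - exp_WT m a b k + exp_XTb m b k)"
proof (cases "j = k")
  case True
  have "a j \<le> Poly_Mapping.lookup \<alpha> (T j)" "1 \<le> Poly_Mapping.lookup \<alpha> (X i)"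
      "1 \<le> Poly_Mapping.lookup \<alpha> (X (m + 1))"
    using exp_dvdD[OF d1, of "T j"] exp_dvdD[OF d1, of "X i"] exp_dvdD[OF d2, of "X (m + 1)"] by simp_all
  then show ?thesis
    using True ij ab critical_pair_X_W[of j i m b a \<alpha>] by (intro joinableI_step) simp
next
  case False
  have "Poly_Mapping.lookup (exp_XT a j i) x = 0 \<or> Poly_Mapping.lookup (exp_WT m a b k) x = 0" for x
    using False ij by (cases x) auto
  then show ?thesis using ij k d1 d2 by (intro joinable_rewrite_disjoint rules_XI rules_WI)
qed

lemma joinable_W_W:
  assumes ab: "\<forall>l\<in>{1..m}. b l \<le> a l" and j: "1 \<le> j1" "j1 \<le> m" "1 \<le> j2" "j2 \<le> m"
    and d1: "exp_dvd (exp_WT m a b j1) \<alpha>" and d2: "exp_dvd (exp_WT m a b j2) \<alpha>"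
  shows "joinable (rewrite (rules m a b))
    (\<alpha> - exp_WT m a b j1 + exp_XTb m b j1) (\<alpha> - exp_WT m a b j2 + exp_XTb m b j2)"
proof -
  have \<alpha>: "a j1 - b j1 \<le> Poly_Mapping.lookup \<alpha> (T j1)" "a j2 - b j2 \<le> Poly_Mapping.lookup \<alpha> (T j2)"
      "1 \<le> Poly_Mapping.lookup \<alpha> (X (m + 1))"
    using exp_dvdD[OF d1, of "T j1"] exp_dvdD[OF d2, of "T j2"] exp_dvdD[OF d1, of "X (m + 1)"] by simp_all
  consider "j1 = j2" | "j1 < j2" | "j2 < j1" by linarith
  then show ?thesis
    using j ab \<alpha> critical_pair_W_W[of j1 j2 m b a \<alpha>] critical_pair_W_W[of j2 j1 m b a \<alpha>]
    by cases (auto intro: joinableI_step)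
qed

lemma confluentp_rules:
  assumes ab: "\<forall>l\<in>{1..m}. b l \<le> a l"
  shows "confluentp (rewrite (rules m a b))"
proof (rule strong_confluentp_imp_confluentp, rule strong_confluentpI)
  fix \<alpha> \<beta>1 \<beta>2 assume s1: "rewrite (rules m a b) \<alpha> \<beta>1" and s2: "rewrite (rules m a b) \<alpha> \<beta>2"
  obtain u1 v1 where r1: "(u1, v1) \<in> rules m a b" and d1: "exp_dvd u1 \<alpha>" and \<beta>1: "\<beta>1 = \<alpha> - u1 + v1"
    using s1 by (rule rewriteE)
  obtain u2 v2 where r2: "(u2, v2) \<in> rules m a b" and d2: "exp_dvd u2 \<alpha>" and \<beta>2: "\<beta>2 = \<alpha> - u2 + v2"
    using s2 by (rule rewriteE)
  have "joinable (rewrite (rules m a b)) \<beta>1 \<beta>2"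
    using r1 r2 d1 d2 unfolding \<beta>1 \<beta>2
    by (elim rulesE)
      (auto intro: joinable_X_X joinable_X_W[OF ab] joinable_W_W[OF ab] joinable_sym[OF joinable_X_W[OF ab]])
  then show "\<exists>\<delta>. (rewrite (rules m a b))\<^sup>*\<^sup>* \<beta>1 \<delta> \<and> (rewrite (rules m a b))\<^sup>=\<^sup>= \<beta>2 \<delta>"
    unfolding joinable_def by blast
qed

theorem initial_ideal_H0:
  assumes "\<forall>l\<in>{1..m}. b l \<le> a l"
  shows "initial_ideal m (H0 m a b :: 'k::field mpoly set) = ideal_gen m (mono ` fst ` rules m a b)"
  unfolding H0_def Gamma0_eq_binomials_rules[OF assms]
  using keys_rules lex_less_rules confluentp_rules[OF assms] by (rule initial_ideal_binomials)

text \<open>\<open>subst_exp k\<close> replaces \<open>X\<^sub>j\<^sub>+\<^sub>1\<close> by \<open>T\<^sub>j\<close> for \<open>1 \<le> j < k\<close>: this is the identification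
  made modulo the binomials \<open>T\<^sub>j - X\<^sub>j\<^sub>+\<^sub>1\<close> among the first \<open>k\<close> elements of the sequence.\<close>

lift_definition subst_exp :: "nat \<Rightarrow> (var \<Rightarrow>\<^sub>0 nat) \<Rightarrow> (var \<Rightarrow>\<^sub>0 nat)" is
  "\<lambda>k f v. case v of T j \<Rightarrow> f (T j) + (if 1 \<le> j \<and> j < k then f (X (Suc j)) else 0)
                   | X i \<Rightarrow> (if 2 \<le> i \<and> i \<le> k then 0 else f (X i))"
proof -
  fix k :: nat and f :: "var \<Rightarrow> nat"
  assume fin: "finite {v. f v \<noteq> 0}"
  let ?g = "\<lambda>v. case v of T j \<Rightarrow> f (T j) + (if 1 \<le> j \<and> j < k then f (X (Suc j)) else 0)
                   | X i \<Rightarrow> (if 2 \<le> i \<and> i \<le> k then 0 else f (X i))"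
  let ?h = "\<lambda>v. case v of X i \<Rightarrow> T (i - 1) | T j \<Rightarrow> T j"
  have "{v. ?g v \<noteq> 0} \<subseteq> {v. f v \<noteq> 0} \<union> ?h ` {v. f v \<noteq> 0}"
  proof
    fix v assume v: "v \<in> {v. ?g v \<noteq> 0}"
    show "v \<in> {v. f v \<noteq> 0} \<union> ?h ` {v. f v \<noteq> 0}"
    proof (cases v)
      case (T j)
      show ?thesis
      proof (cases "f (T j) = 0")
        case True
        then have "f (X (Suc j)) \<noteq> 0" using v T by (auto split: if_splits)
        moreover have "?h (X (Suc j)) = v" using T by simp
        ultimately show ?thesis by (metis (mono_tags, lifting) UnI2 imageI mem_Collect_eq)
      qed (use T in simp)
    qed (use v in \<open>auto split: if_splits\<close>)
  qed
  moreover have "finite ({v. f v \<noteq> 0} \<union> ?h ` {v. f v \<noteq> 0})" using fin by simp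
  ultimately show "finite {v. ?g v \<noteq> 0}" by (rule finite_subset)
qed

lemma lookup_subst_exp [simp]:
  "Poly_Mapping.lookup (subst_exp k \<alpha>) (T j) =
     Poly_Mapping.lookup \<alpha> (T j) + (if 1 \<le> j \<and> j < k then Poly_Mapping.lookup \<alpha> (X (Suc j)) else 0)"
  "Poly_Mapping.lookup (subst_exp k \<alpha>) (X i) = (if 2 \<le> i \<and> i \<le> k then 0 else Poly_Mapping.lookup \<alpha> (X i))"
  by (simp_all add: subst_exp.rep_eq)

lemma subst_exp_add: "subst_exp k (\<alpha> + \<beta>) = subst_exp k \<alpha> + subst_exp k \<beta>"
proof (rule poly_mapping_eqI)
  fix v show "Poly_Mapping.lookup (subst_exp k (\<alpha> + \<beta>)) v = Poly_Mapping.lookup (subst_exp k \<alpha> + subst_exp k \<beta>) v"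
    by (cases v) (auto simp: lookup_add)
qed

lemma subst_exp_id:
  assumes "\<And>i. 2 \<le> i \<Longrightarrow> i \<le> k \<Longrightarrow> Poly_Mapping.lookup \<alpha> (X i) = 0"
  shows "subst_exp k \<alpha> = \<alpha>"
proof (rule poly_mapping_eqI)
  fix v show "Poly_Mapping.lookup (subst_exp k \<alpha>) v = Poly_Mapping.lookup \<alpha> v"
    using assms by (cases v) auto
qed

lemma subst_exp_0: "subst_exp 0 \<alpha> = \<alpha>"
  by (rule subst_exp_id) auto

lemma subst_exp_varexp_T: "subst_exp k (varexp (T j)) = varexp (T j)"
  by (rule subst_exp_id) (simp add: lookup_varexp)

lemma subst_exp_varexp_X_fixed: "\<not> (2 \<le> i \<and> i \<le> k) \<Longrightarrow> subst_exp k (varexp (X i)) = varexp (X i)"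
  by (rule subst_exp_id) (auto simp: lookup_varexp)

lemma subst_exp_varexp_X:
  assumes "2 \<le> i" "i \<le> k"
  shows "subst_exp k (varexp (X i)) = varexp (T (i - 1))"
proof (rule poly_mapping_eqI)
  fix v show "Poly_Mapping.lookup (subst_exp k (varexp (X i))) v = Poly_Mapping.lookup (varexp (T (i - 1))) v"
    using assms by (cases v) (auto simp: lookup_varexp)
qed

lemma subst_exp_eq_0_iff [simp]: "subst_exp k \<alpha> = 0 \<longleftrightarrow> \<alpha> = 0"
proof
  assume z: "subst_exp k \<alpha> = 0"
  show "\<alpha> = 0"
  proof (rule poly_mapping_eqI)
    fix v show "Poly_Mapping.lookup \<alpha> v = Poly_Mapping.lookup 0 v"
    proof (cases v)
      case (T j)
      then show ?thesis using arg_cong[OF z, of "\<lambda>\<beta>. Poly_Mapping.lookup \<beta> (T j)"] by simp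
    next
      case (X i)
      then show ?thesis
        using arg_cong[OF z, of "\<lambda>\<beta>. Poly_Mapping.lookup \<beta> (X i)"]
          arg_cong[OF z, of "\<lambda>\<beta>. Poly_Mapping.lookup \<beta> (T (i - 1))"]
        by (auto split: if_splits)
    qed
  qed
qed (simp add: subst_exp_id)

definition subst_normal :: "nat \<Rightarrow> nat \<Rightarrow> (var \<Rightarrow>\<^sub>0 nat) \<Rightarrow> bool" where
  "subst_normal m k c \<longleftrightarrow>
     Poly_Mapping.keys c \<subseteq> vars m \<and> (\<forall>i. 2 \<le> i \<and> i \<le> k \<longrightarrow> Poly_Mapping.lookup c (X i) = 0)"

lemma subst_normal_subst_exp:
  assumes "Poly_Mapping.keys \<alpha> \<subseteq> vars m" "k \<le> m + 1"
  shows "subst_normal m k (subst_exp k \<alpha>)"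
  unfolding subst_normal_def
proof (intro conjI allI impI subsetI)
  fix v assume v: "v \<in> Poly_Mapping.keys (subst_exp k \<alpha>)"
  show "v \<in> vars m"
  proof (cases v)
    case (T j)
    then have "T j \<in> Poly_Mapping.keys \<alpha> \<or> (1 \<le> j \<and> j < k)"
      using v by (auto simp: in_keys_iff split: if_splits)
    then show ?thesis using assms T by auto
  next
    case (X i)
    then have "X i \<in> Poly_Mapping.keys \<alpha>" using v by (auto simp: in_keys_iff split: if_splits)
    then show ?thesis using assms X by blast
  qed
qed simp

definition reg_seq :: "nat \<Rightarrow> 'k::field mpoly list" where
  "reg_seq m = mono (varexp (X 1)) # map (\<lambda>k. mono (varexp (T k)) - mono (varexp (X (k + 1)))) [1..<m + 1]"

lemma length_reg_seq [simp]: "length (reg_seq m) = m + 1"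
  by (simp add: reg_seq_def)

lemma nth_reg_seq_0: "reg_seq m ! 0 = mono (varexp (X 1))"
  by (simp add: reg_seq_def)

lemma nth_reg_seq:
  assumes "1 \<le> k" "k \<le> m"
  shows "reg_seq m ! k = mono (varexp (T k)) - mono (varexp (X (k + 1)))"
proof -
  have "[Suc 0..<Suc m] ! (k - Suc 0) = k" using assms by (subst nth_upt) auto
  moreover have "k - Suc 0 < length [Suc 0..<Suc m]" using assms by simp
  ultimately show ?thesis using assms by (simp add: reg_seq_def nth_Cons' nth_map del: upt_Suc)
qed

lemma set_take_reg_seq:
  assumes "k \<le> m + 1"
  shows "set (take k (reg_seq m)) = (if k = 0 then {} else
      insert (mono (varexp (X 1))) ((\<lambda>j. mono (varexp (T j)) - mono (varexp (X (j + 1)))) ` {1..<k}))"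
proof (cases k)
  case (Suc k')
  have "take k' [1..<m + 1] = [1..<k' + 1]" using assms Suc by (simp add: take_upt min_def del: upt_Suc)
  then show ?thesis using Suc by (simp add: reg_seq_def take_map del: upt_Suc)
qed simp

definition seq_ideal :: "nat \<Rightarrow> (nat \<Rightarrow> nat) \<Rightarrow> (nat \<Rightarrow> nat) \<Rightarrow> nat \<Rightarrow> 'k::field mpoly set" where
  "seq_ideal m a b k = ideal_gen m (mono ` fst ` rules m a b \<union> set (take k (reg_seq m)))"

definition mon_gens :: "nat \<Rightarrow> (nat \<Rightarrow> nat) \<Rightarrow> (nat \<Rightarrow> nat) \<Rightarrow> nat \<Rightarrow> (var \<Rightarrow>\<^sub>0 nat) set" where
  "mon_gens m a b k = fst ` rules m a b \<union> (if k = 0 then {} else {varexp (X 1)})"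

definition subst_pairs :: "nat \<Rightarrow> ((var \<Rightarrow>\<^sub>0 nat) \<times> (var \<Rightarrow>\<^sub>0 nat)) set" where
  "subst_pairs k = {(varexp (T j), varexp (X (j + 1))) | j. 1 \<le> j \<and> j < k}"

lemma binomials_subst_pairs:
  "binomials (subst_pairs k) = (\<lambda>j. mono (varexp (T j)) - mono (varexp (X (j + 1)))) ` {1..<k}"
  unfolding binomials_def subst_pairs_def by force

lemma seq_ideal_eq:
  assumes "k \<le> m + 1"
  shows "seq_ideal m a b k = ideal_gen m (mono ` mon_gens m a b k \<union> binomials (subst_pairs k))"
proof -
  have "mono ` fst ` rules m a b \<union> set (take k (reg_seq m))
      = mono ` mon_gens m a b k \<union> (binomials (subst_pairs k) :: 'a mpoly set)"
    using assms by (auto simp: set_take_reg_seq mon_gens_def binomials_subst_pairs)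
  then show ?thesis unfolding seq_ideal_def by simp
qed

lemma mon_gens_keys: "g \<in> mon_gens m a b k \<Longrightarrow> Poly_Mapping.keys g \<subseteq> vars m"
  unfolding mon_gens_def using keys_rules by (fastforce split: if_splits)

lemma mono_mon_gens_mem:
  assumes "g \<in> mon_gens m a b k" "k \<le> m + 1"
  shows "mono g \<in> (seq_ideal m a b k :: 'k::field mpoly set)"
  unfolding seq_ideal_eq[OF assms(2)] using assms(1) by (intro ideal_gen_gen) blast

lemma subst_pair_mem:
  assumes "1 \<le> j" "j < k" "k \<le> m + 1"
  shows "mono (varexp (T j)) - mono (varexp (X (j + 1))) \<in> (seq_ideal m a b k :: 'k::field mpoly set)"
  unfolding seq_ideal_eq[OF assms(3)] using assms
  by (intro ideal_gen_gen) (auto simp: binomials_subst_pairs)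

definition standard :: "nat \<Rightarrow> (nat \<Rightarrow> nat) \<Rightarrow> (nat \<Rightarrow> nat) \<Rightarrow> nat \<Rightarrow> (var \<Rightarrow>\<^sub>0 nat) \<Rightarrow> bool" where
  "standard m a b k c \<longleftrightarrow>
     (\<forall>\<nu> g. Poly_Mapping.keys \<nu> \<subseteq> vars m \<longrightarrow> g \<in> mon_gens m a b k \<longrightarrow> subst_exp k (\<nu> + g) \<noteq> c)"

lemma fiber_coeff_seq_ideal:
  assumes "k \<le> m + 1" "standard m a b k c" "h \<in> (seq_ideal m a b k :: 'k::field mpoly set)"
  shows "fiber_coeff (subst_exp k) c h = 0"
proof (rule fiber_coeff_ideal_gen_eq_0)
  show "h \<in> ideal_gen m (mono ` mon_gens m a b k \<union> binomials (subst_pairs k))"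
    using assms(3) unfolding seq_ideal_eq[OF assms(1)] .
  show "subst_exp k (\<nu> + g) \<noteq> c" if "Poly_Mapping.keys \<nu> \<subseteq> vars m" "g \<in> mon_gens m a b k" for \<nu> g
    using assms(2) that unfolding standard_def by blast
  show "subst_exp k (\<nu> + u) = subst_exp k (\<nu> + v)" if "(u, v) \<in> subst_pairs k" for \<nu> u v
    using that by (auto simp: subst_pairs_def subst_exp_add subst_exp_varexp_T subst_exp_varexp_X)
qed

lemma mono_diff_mono_subst_exp_mem:
  assumes "k \<le> m + 1" "Poly_Mapping.keys \<rho> \<subseteq> vars m"
  shows "mono \<rho> - mono (subst_exp k \<rho>) \<in> (seq_ideal m a b k :: 'k::field mpoly set)"
  using assms(2)
proof (induction "\<Sum>i\<in>{2..k}. Poly_Mapping.lookup \<rho> (X i)" arbitrary: \<rho> rule: less_induct)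
  case less
  show ?case
  proof (cases "\<forall>i. 2 \<le> i \<and> i \<le> k \<longrightarrow> Poly_Mapping.lookup \<rho> (X i) = 0")
    case True
    then have "subst_exp k \<rho> = \<rho>" by (intro subst_exp_id) auto
    then show ?thesis by (simp add: seq_ideal_def)
  next
    case False
    then obtain i where i: "2 \<le> i" "i \<le> k" "Poly_Mapping.lookup \<rho> (X i) \<noteq> 0" by blast
    define \<nu> where "\<nu> = \<rho> - varexp (X i)"
    have \<rho>: "\<rho> = \<nu> + varexp (X i)"
      unfolding \<nu>_def using i(3) by (intro exp_dvd_diff_add[symmetric] exp_dvdI) (auto simp: lookup_varexp)
    define \<rho>' where "\<rho>' = \<nu> + varexp (T (i - 1))"
    have \<nu>_keys: "Poly_Mapping.keys \<nu> \<subseteq> vars m" using less.prems \<rho> by (auto simp: keys_add_nat)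
    have "(\<Sum>i\<in>{2..k}. Poly_Mapping.lookup \<rho>' (X i)) < (\<Sum>i\<in>{2..k}. Poly_Mapping.lookup \<rho> (X i))"
      using i \<rho> by (simp add: \<rho>'_def lookup_add lookup_varexp sum.distrib)
    moreover have "Poly_Mapping.keys \<rho>' \<subseteq> vars m" using \<nu>_keys i assms(1) by (auto simp: \<rho>'_def keys_add_nat)
    ultimately have IH: "mono \<rho>' - mono (subst_exp k \<rho>') \<in> (seq_ideal m a b k :: 'k mpoly set)"
      by (rule less.hyps)
    have "subst_exp k \<rho>' = subst_exp k \<rho>"
      using i \<rho> by (simp add: \<rho>'_def subst_exp_add subst_exp_varexp_T subst_exp_varexp_X)
    moreover have "mono (\<nu> + varexp (T (i - 1))) - mono (\<nu> + varexp (X i)) \<in> (seq_ideal m a b k :: 'k mpoly set)"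
    proof -
      have "mono (varexp (T (i - 1))) - mono (varexp (X (i - 1 + 1))) \<in> (seq_ideal m a b k :: 'k mpoly set)"
        using i assms(1) by (intro subst_pair_mem) auto
      then have "mono \<nu> * (mono (varexp (T (i - 1))) - mono (varexp (X i))) \<in> (seq_ideal m a b k :: 'k mpoly set)"
        using i unfolding seq_ideal_def by (intro ideal_gen_mult Sring_mono \<nu>_keys) simp
      then show ?thesis by (simp add: right_diff_distrib mono_mult)
    qed
    ultimately have "mono \<rho> - mono \<rho>' + (mono \<rho>' - mono (subst_exp k \<rho>)) \<in> (seq_ideal m a b k :: 'k mpoly set)"
      using IH \<rho> unfolding \<rho>'_def seq_ideal_def by (metis ideal_gen_add ideal_gen_uminus minus_diff_eq)
    then show ?thesis by simp
  qed
qed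

lemma mono_mem_seq_ideal_if_not_standard:
  assumes "k \<le> m + 1" "\<not> standard m a b k c"
  shows "mono c \<in> (seq_ideal m a b k :: 'k::field mpoly set)"
proof -
  obtain \<nu> g where \<nu>: "Poly_Mapping.keys \<nu> \<subseteq> vars m" and g: "g \<in> mon_gens m a b k"
    and c: "subst_exp k (\<nu> + g) = c"
    using assms(2) unfolding standard_def by blast
  have "mono (\<nu> + g) \<in> (seq_ideal m a b k :: 'k mpoly set)"
    using mono_mon_gens_mem[OF g assms(1)] \<nu> unfolding seq_ideal_def by (rule mono_mult_mem_ideal_gen[rotated])
  moreover have "mono (\<nu> + g) - mono c \<in> (seq_ideal m a b k :: 'k mpoly set)"
    using mono_diff_mono_subst_exp_mem[OF assms(1), of "\<nu> + g"] \<nu> mon_gens_keys[OF g] c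
    by (simp add: keys_add_nat)
  ultimately have "mono (\<nu> + g) - (mono (\<nu> + g) - mono c) \<in> (seq_ideal m a b k :: 'k mpoly set)"
    unfolding seq_ideal_def by (rule ideal_gen_diff)
  then show ?thesis by simp
qed

theorem seq_ideal_iff:
  assumes "k \<le> m + 1" "g \<in> Sring m"
  shows "g \<in> (seq_ideal m a b k :: 'k::field mpoly set) \<longleftrightarrow>
    (\<forall>c. standard m a b k c \<longrightarrow> fiber_coeff (subst_exp k) c g = 0)"
proof
  show "g \<in> seq_ideal m a b k \<Longrightarrow> \<forall>c. standard m a b k c \<longrightarrow> fiber_coeff (subst_exp k) c g = 0"
    using fiber_coeff_seq_ideal[OF assms(1)] by blast
next
  assume vanish: "\<forall>c. standard m a b k c \<longrightarrow> fiber_coeff (subst_exp k) c g = 0"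
  let ?K = "Poly_Mapping.keys g"
  let ?s = "\<Sum>\<rho>\<in>?K. Poly_Mapping.single (subst_exp k \<rho>) (Poly_Mapping.lookup g \<rho>)"
  have "g - ?s = (\<Sum>\<rho>\<in>?K. Poly_Mapping.single 0 (Poly_Mapping.lookup g \<rho>) * (mono \<rho> - mono (subst_exp k \<rho>)))"
    by (subst poly_mapping_sum_single[of g]) (simp add: sum_subtractf right_diff_distrib mono_def mult_single)
  also have "\<dots> \<in> seq_ideal m a b k"
    unfolding seq_ideal_def
    using mono_diff_mono_subst_exp_mem[OF assms(1) SringD[OF assms(2)]]
    by (intro ideal_gen_sum ideal_gen_mult Sring_const) (simp add: seq_ideal_def)
  finally have rest: "g - ?s \<in> seq_ideal m a b k" .
  have "?s = (\<Sum>c\<in>subst_exp k ` ?K. \<Sum>\<rho>\<in>{\<rho> \<in> ?K. subst_exp k \<rho> = c}.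
      Poly_Mapping.single (subst_exp k \<rho>) (Poly_Mapping.lookup g \<rho>))"
    by (rule sum.image_gen) simp
  also have "\<dots> = (\<Sum>c\<in>subst_exp k ` ?K. Poly_Mapping.single c (fiber_coeff (subst_exp k) c g))"
    unfolding fiber_coeff_def single_sum sum.inter_filter[OF finite_keys, symmetric]
    by (intro sum.cong) auto
  also have "\<dots> \<in> seq_ideal m a b k"
  proof (unfold seq_ideal_def, rule ideal_gen_sum)
    fix c
    show "Poly_Mapping.single c (fiber_coeff (subst_exp k) c g) \<in> ideal_gen m (mono ` fst ` rules m a b \<union> set (take k (reg_seq m)))"
    proof (cases "standard m a b k c")
      case False
      then have "Poly_Mapping.single 0 (fiber_coeff (subst_exp k) c g) * mono c \<in> seq_ideal m a b k"
        using mono_mem_seq_ideal_if_not_standard[OF assms(1)] unfolding seq_ideal_def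
        by (intro ideal_gen_mult Sring_const)
      then show ?thesis unfolding seq_ideal_def by (simp add: mono_def mult_single)
    qed (use vanish in simp)
  qed
  finally have "?s \<in> seq_ideal m a b k" .
  with rest have "(g - ?s) + ?s \<in> (seq_ideal m a b k :: 'k mpoly set)"
    unfolding seq_ideal_def by (rule ideal_gen_add)
  then show "g \<in> seq_ideal m a b k" by simp
qed

lemma standard_of_standard_add:
  assumes "Poly_Mapping.keys e \<subseteq> vars m" "subst_exp k e = e" "standard m a b k (c + e)"
  shows "standard m a b k c"
  unfolding standard_def
proof (intro allI impI notI)
  fix \<nu> g assume \<nu>: "Poly_Mapping.keys \<nu> \<subseteq> vars m" and g: "g \<in> mon_gens m a b k"
    and eq: "subst_exp k (\<nu> + g) = c"
  have "subst_exp k ((\<nu> + e) + g) = c + e"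
    using eq assms(2) by (simp add: subst_exp_add ac_simps)
  moreover have "Poly_Mapping.keys (\<nu> + e) \<subseteq> vars m" using \<nu> assms(1) by (simp add: keys_add_nat)
  ultimately show False using assms(3) g unfolding standard_def by blast
qed

lemma not_standard_iff:
  assumes "subst_normal m k c"
  shows "\<not> standard m a b k c \<longleftrightarrow> (\<exists>g\<in>mon_gens m a b k. exp_dvd (subst_exp k g) c)"
proof
  assume "\<not> standard m a b k c"
  then obtain \<nu> g where "g \<in> mon_gens m a b k" "subst_exp k (\<nu> + g) = c"
    unfolding standard_def by blast
  then show "\<exists>g\<in>mon_gens m a b k. exp_dvd (subst_exp k g) c"
    using exp_dvd_add[of "subst_exp k g" "subst_exp k \<nu>"] by (auto simp: subst_exp_add)
next
  assume "\<exists>g\<in>mon_gens m a b k. exp_dvd (subst_exp k g) c"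
  then obtain g where g: "g \<in> mon_gens m a b k" and d: "exp_dvd (subst_exp k g) c" by blast
  define \<nu> where "\<nu> = c - subst_exp k g"
  have c: "c = \<nu> + subst_exp k g" unfolding \<nu>_def using exp_dvd_diff_add[OF d] by simp
  have "Poly_Mapping.keys \<nu> \<subseteq> vars m"
    using assms c unfolding subst_normal_def by (auto simp: keys_add_nat)
  moreover have "subst_exp k \<nu> = \<nu>"
    using assms c unfolding subst_normal_def by (intro subst_exp_id) (auto simp: lookup_add)
  then have "subst_exp k (\<nu> + g) = c" using c by (simp add: subst_exp_add)
  ultimately show "\<not> standard m a b k c" using g unfolding standard_def by blast
qed

lemma fiber_coeff_subst_exp_not_normal:
  assumes "k \<le> m + 1" "g \<in> Sring m" "\<not> subst_normal m k c"
  shows "fiber_coeff (subst_exp k) c g = 0"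
proof -
  have "subst_exp k \<rho> \<noteq> c" if "\<rho> \<in> Poly_Mapping.keys g" for \<rho>
    using subst_normal_subst_exp[OF SringD[OF assms(2) that] assms(1)] assms(3) by auto
  then show ?thesis unfolding fiber_coeff_def by (intro sum.neutral) auto
qed

lemma fiber_coeff_mult_fixed:
  assumes "subst_exp k e = e"
  shows "fiber_coeff (subst_exp k) c (g * mono e :: 'k::field mpoly) =
    (if exp_dvd e c then fiber_coeff (subst_exp k) (c - e) g else 0)"
proof -
  have shift: "subst_exp k (\<rho> + e) = subst_exp k \<rho> + e" for \<rho>
    using assms by (simp add: subst_exp_add)
  show ?thesis
  proof (cases "exp_dvd e c")
    case True
    have "subst_exp k (\<rho> + e) = c \<longleftrightarrow> subst_exp k \<rho> = c - e" for \<rho>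
      unfolding shift using exp_dvd_diff_add[OF True] by (metis add_diff_cancel_right')
    then show ?thesis using True unfolding fiber_coeff_mult_mono by (simp add: fiber_coeff_def)
  next
    case False
    then have "subst_exp k (\<rho> + e) \<noteq> c" for \<rho>
      unfolding shift using exp_dvd_add by metis
    then show ?thesis using False by (simp add: fiber_coeff_mult_mono)
  qed
qed

section \<open>Slices in the variables \<open>T\<^sub>k\<close> and \<open>X\<^sub>k\<^sub>+\<^sub>1\<close>\<close>

definition slice :: "nat \<Rightarrow> (var \<Rightarrow>\<^sub>0 nat) \<Rightarrow> nat \<Rightarrow> nat \<Rightarrow> (var \<Rightarrow>\<^sub>0 nat)" where
  "slice k B p q = B + Poly_Mapping.single (T k) p + Poly_Mapping.single (X (k + 1)) q"

definition dvd_off_slice :: "nat \<Rightarrow> (var \<Rightarrow>\<^sub>0 nat) \<Rightarrow> (var \<Rightarrow>\<^sub>0 nat) \<Rightarrow> bool" where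
  "dvd_off_slice k u B \<longleftrightarrow>
     (\<forall>x. x \<noteq> T k \<and> x \<noteq> X (k + 1) \<longrightarrow> Poly_Mapping.lookup u x \<le> Poly_Mapping.lookup B x)"

lemma lookup_slice: "Poly_Mapping.lookup (slice k B p q) x =
   Poly_Mapping.lookup B x + (if x = T k then p else 0) + (if x = X (k + 1) then q else 0)"
  by (simp add: slice_def lookup_add lookup_single when_def eq_commute)

lemma slice_add_T: "slice k B p q + varexp (T k) = slice k B (Suc p) q"
  by (rule poly_mapping_eqI) (simp add: lookup_slice lookup_add lookup_varexp)

lemma slice_add_X: "slice k B p q + varexp (X (k + 1)) = slice k B p (Suc q)"
  by (rule poly_mapping_eqI) (simp add: lookup_slice lookup_add lookup_varexp)

lemma slice_diff_T: "1 \<le> p \<Longrightarrow> slice k B p q - varexp (T k) = slice k B (p - 1) q"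
  by (rule poly_mapping_eqI) (simp add: lookup_slice lookup_minus lookup_varexp)

lemma slice_diff_X: "1 \<le> q \<Longrightarrow> slice k B p q - varexp (X (k + 1)) = slice k B p (q - 1)"
  by (rule poly_mapping_eqI) (simp add: lookup_slice lookup_minus lookup_varexp)

context
  fixes k :: nat and B :: "var \<Rightarrow>\<^sub>0 nat"
  assumes B_T: "Poly_Mapping.lookup B (T k) = 0" and B_X: "Poly_Mapping.lookup B (X (k + 1)) = 0"
begin

lemma exp_dvd_slice_iff:
  "exp_dvd u (slice k B p q) \<longleftrightarrow>
     Poly_Mapping.lookup u (T k) \<le> p \<and> Poly_Mapping.lookup u (X (k + 1)) \<le> q \<and> dvd_off_slice k u B"
proof
  assume d: "exp_dvd u (slice k B p q)"
  have le: "Poly_Mapping.lookup u x \<le>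
      Poly_Mapping.lookup B x + (if x = T k then p else 0) + (if x = X (k + 1) then q else 0)" for x
    using exp_dvdD[OF d, of x] by (simp add: lookup_slice)
  have "dvd_off_slice k u B"
    unfolding dvd_off_slice_def
  proof (intro allI impI)
    fix x assume "x \<noteq> T k \<and> x \<noteq> X (k + 1)"
    then show "Poly_Mapping.lookup u x \<le> Poly_Mapping.lookup B x" using le[of x] by simp
  qed
  then show "Poly_Mapping.lookup u (T k) \<le> p \<and> Poly_Mapping.lookup u (X (k + 1)) \<le> q \<and> dvd_off_slice k u B"
    using le[of "T k"] le[of "X (k + 1)"] B_T B_X by simp
next
  assume "Poly_Mapping.lookup u (T k) \<le> p \<and> Poly_Mapping.lookup u (X (k + 1)) \<le> q \<and> dvd_off_slice k u B"
  then show "exp_dvd u (slice k B p q)"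
    using B_T B_X by (intro exp_dvdI) (auto simp: dvd_off_slice_def lookup_slice)
qed

lemma varexp_T_dvd_slice_iff: "exp_dvd (varexp (T k)) (slice k B p q) \<longleftrightarrow> 1 \<le> p"
  using exp_dvd_slice_iff[of "varexp (T k)"] by (auto simp: dvd_off_slice_def lookup_varexp)

lemma varexp_X_dvd_slice_iff: "exp_dvd (varexp (X (k + 1))) (slice k B p q) \<longleftrightarrow> 1 \<le> q"
  using exp_dvd_slice_iff[of "varexp (X (k + 1))"] by (auto simp: dvd_off_slice_def lookup_varexp)

end

lemma subst_normal_slice_decomposition:
  assumes k: "1 \<le> k" "k \<le> m" and c: "subst_normal m k c"
  obtains B where "Poly_Mapping.lookup B (T k) = 0" "Poly_Mapping.lookup B (X (k + 1)) = 0"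
    "slice k B (Poly_Mapping.lookup c (T k)) (Poly_Mapping.lookup c (X (k + 1))) = c"
    "\<And>p q. subst_normal m k (slice k B p q)"
proof
  define B where "B = c - Poly_Mapping.single (T k) (Poly_Mapping.lookup c (T k))
    - Poly_Mapping.single (X (k + 1)) (Poly_Mapping.lookup c (X (k + 1)))"
  have lookup_B: "Poly_Mapping.lookup B x =
      (if x = T k \<or> x = X (k + 1) then 0 else Poly_Mapping.lookup c x)" for x
    by (auto simp: B_def lookup_minus lookup_single when_def)
  then show "Poly_Mapping.lookup B (T k) = 0" "Poly_Mapping.lookup B (X (k + 1)) = 0" by simp_all
  show "slice k B (Poly_Mapping.lookup c (T k)) (Poly_Mapping.lookup c (X (k + 1))) = c"
    by (rule poly_mapping_eqI) (auto simp: lookup_slice lookup_B)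
  show "subst_normal m k (slice k B p q)" for p q
    unfolding subst_normal_def
  proof (intro conjI allI impI subsetI)
    fix x assume "x \<in> Poly_Mapping.keys (slice k B p q)"
    then have "x \<in> Poly_Mapping.keys c \<or> x = T k \<or> x = X (k + 1)"
      by (auto simp: in_keys_iff lookup_slice lookup_B split: if_splits)
    then show "x \<in> vars m" using c k unfolding subst_normal_def by auto
  qed (use c in \<open>auto simp: subst_normal_def lookup_slice lookup_B\<close>)
qed

lemma mon_gensE:
  assumes "g \<in> mon_gens m a b k"
  obtains (X1) "k \<noteq> 0" "g = varexp (X 1)"
    | (X) i j where "1 \<le> j" "j < i" "i \<le> m" "g = exp_XT a j i"
    | (W) j where "1 \<le> j" "j \<le> m" "g = exp_WT m a b j"
  using assms unfolding mon_gens_def rules_def by (auto split: if_splits)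

lemma lookup_mon_gens_X_le_1: "g \<in> mon_gens m a b k \<Longrightarrow> Poly_Mapping.lookup g (X n) \<le> 1"
  by (erule mon_gensE) (auto simp: lookup_varexp)

text \<open>Two generators meeting a slice, one through \<open>T\<^sub>k\<close> alone and one through \<open>X\<^sub>k\<^sub>+\<^sub>1\<close> with fewer
  \<open>T\<^sub>k\<close>, force a generator that misses both variables: the second is \<open>T\<^sub>j\<^bsup>a\<^sub>j\<^esup> X\<^sub>k\<^sub>+\<^sub>1\<close> with
  \<open>j < k\<close>, and \<open>T\<^sub>j\<^bsup>a\<^sub>j\<^esup>\<close> times the remaining variable of the first is again a generator.\<close>

lemma mon_gens_avoiding_slice_vars:
  assumes k: "1 \<le> k" "k \<le> m"
    and g1: "g1 \<in> mon_gens m a b k" "dvd_off_slice k (subst_exp k g1) B"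
      "1 \<le> Poly_Mapping.lookup g1 (T k)" "Poly_Mapping.lookup g1 (X (k + 1)) = 0"
    and g2: "g2 \<in> mon_gens m a b k" "dvd_off_slice k (subst_exp k g2) B"
      "1 \<le> Poly_Mapping.lookup g2 (X (k + 1))" "Poly_Mapping.lookup g2 (T k) < Poly_Mapping.lookup g1 (T k)"
  shows "\<exists>g3\<in>mon_gens m a b k. dvd_off_slice k (subst_exp k g3) B \<and>
    Poly_Mapping.lookup g3 (T k) = 0 \<and> Poly_Mapping.lookup g3 (X (k + 1)) = 0"
proof -
  have g1_le: "Poly_Mapping.lookup g1 (T k) \<le> a k"
    using g1(1) by (cases rule: mon_gensE) (auto simp: lookup_varexp)
  obtain j' where j': "1 \<le> j'" "j' < k" "g2 = exp_XT a j' (k + 1)"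
    using g2(1)
  proof (cases rule: mon_gensE)
    case (X i j)
    then show ?thesis using g2(3,4) g1_le that by (auto split: if_splits)
  next
    case (W j)
    then have "k = m" using g2(3) by (simp split: if_splits)
    with g1(1) show ?thesis
      using g1(3,4) by (cases rule: mon_gensE) (auto simp: lookup_varexp split: if_splits)
  qed (use g2(3) k in \<open>simp add: lookup_varexp\<close>)
  have Tj': "a j' \<le> Poly_Mapping.lookup B (T j')"
    using g2(2)[unfolded dvd_off_slice_def, rule_format, of "T j'"] j' by simp
  from g1(1) show ?thesis
  proof (cases rule: mon_gensE)
    case (X i j)
    have jk: "j = k" and ik: "i \<noteq> k + 1" using X g1(3,4) by (simp_all split: if_splits)
    have "Poly_Mapping.lookup (subst_exp k g1) (X i) \<le> Poly_Mapping.lookup B (X i)"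
      using g1(2)[unfolded dvd_off_slice_def, rule_format, of "X i"] ik by simp
    then have Xi: "1 \<le> Poly_Mapping.lookup B (X i)" using X jk by simp
    have "exp_XT a j' i \<in> mon_gens m a b k"
      unfolding mon_gens_def using X jk j' by (intro UnI1) (force intro: rules_XI)
    moreover have "subst_exp k (exp_XT a j' i) = exp_XT a j' i" using X jk by (intro subst_exp_id) auto
    moreover have "dvd_off_slice k (exp_XT a j' i) B"
      unfolding dvd_off_slice_def
    proof (intro allI impI)
      fix x show "Poly_Mapping.lookup (exp_XT a j' i) x \<le> Poly_Mapping.lookup B x"
        using Tj' Xi by (cases x) auto
    qed
    ultimately show ?thesis using j' ik by (intro bexI[of _ "exp_XT a j' i"]) auto
  next
    case (W j)
    have jk: "j = k" and km: "k \<noteq> m" using W g1(3,4) by (simp_all split: if_splits)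
    have "Poly_Mapping.lookup (subst_exp k g1) (X (m + 1)) \<le> Poly_Mapping.lookup B (X (m + 1))"
      using g1(2)[unfolded dvd_off_slice_def, rule_format, of "X (m + 1)"] km by simp
    then have Xm: "1 \<le> Poly_Mapping.lookup B (X (m + 1))" using W k by simp
    have "exp_WT m a b j' \<in> mon_gens m a b k"
      unfolding mon_gens_def using k j' by (intro UnI1) (force intro: rules_WI)
    moreover have "subst_exp k (exp_WT m a b j') = exp_WT m a b j'" using k by (intro subst_exp_id) auto
    moreover have "dvd_off_slice k (exp_WT m a b j') B"
      unfolding dvd_off_slice_def
    proof (intro allI impI)
      fix x show "Poly_Mapping.lookup (exp_WT m a b j') x \<le> Poly_Mapping.lookup B x"
        using Tj' Xm by (cases x) auto
    qed
    ultimately show ?thesis using j' km k by (intro bexI[of _ "exp_WT m a b j'"]) auto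
  qed (use g1(3) in \<open>simp add: lookup_varexp\<close>)
qed

lemma mon_gens_slice_min:
  assumes k: "1 \<le> k" "k \<le> m"
    and g1: "g1 \<in> mon_gens m a b k" "dvd_off_slice k (subst_exp k g1) B"
      "Poly_Mapping.lookup g1 (T k) \<le> p1" "Poly_Mapping.lookup g1 (X (k + 1)) \<le> q1"
    and g2: "g2 \<in> mon_gens m a b k" "dvd_off_slice k (subst_exp k g2) B"
      "Poly_Mapping.lookup g2 (T k) \<le> p2" "Poly_Mapping.lookup g2 (X (k + 1)) \<le> q2"
  shows "\<exists>g3\<in>mon_gens m a b k. dvd_off_slice k (subst_exp k g3) B \<and>
    Poly_Mapping.lookup g3 (T k) \<le> min p1 p2 \<and> Poly_Mapping.lookup g3 (X (k + 1)) \<le> min q1 q2"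
proof -
  let ?s1 = "Poly_Mapping.lookup g1 (T k)" and ?t1 = "Poly_Mapping.lookup g1 (X (k + 1))"
  let ?s2 = "Poly_Mapping.lookup g2 (T k)" and ?t2 = "Poly_Mapping.lookup g2 (X (k + 1))"
  have "?t1 \<le> 1" "?t2 \<le> 1" using g1(1) g2(1) lookup_mon_gens_X_le_1 by blast+
  then consider "?s1 \<le> p2 \<and> ?t1 \<le> q2" | "?s2 \<le> p1 \<and> ?t2 \<le> q1"
    | "?t1 = 0" "1 \<le> ?t2" "1 \<le> ?s1" "?s2 < ?s1" | "?t2 = 0" "1 \<le> ?t1" "1 \<le> ?s2" "?s1 < ?s2"
    using g1 g2 by linarith
  then show ?thesis
  proof cases
    case 3
    then show ?thesis
      using mon_gens_avoiding_slice_vars[OF k g1(1,2) _ _ g2(1,2)] by fastforce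
  next
    case 4
    then show ?thesis
      using mon_gens_avoiding_slice_vars[OF k g2(1,2) _ _ g1(1,2)] by fastforce
  qed (use g1 g2 in auto)
qed

lemma standard_slice_row_or_column:
  assumes k: "1 \<le> k" "k \<le> m"
    and B: "Poly_Mapping.lookup B (T k) = 0" "Poly_Mapping.lookup B (X (k + 1)) = 0"
    and normal: "\<And>p q. subst_normal m k (slice k B p q)"
    and std: "standard m a b k (slice k B p q)"
  shows "(\<forall>p'. standard m a b k (slice k B p' q)) \<or> (\<forall>q'. standard m a b k (slice k B p q'))"
proof (rule ccontr)
  assume "\<not> ?thesis"
  then obtain p' q' where "\<not> standard m a b k (slice k B p' q)" "\<not> standard m a b k (slice k B p q')"
    by blast
  then obtain g1 g2 where g1: "g1 \<in> mon_gens m a b k" "exp_dvd (subst_exp k g1) (slice k B p' q)"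
    and g2: "g2 \<in> mon_gens m a b k" "exp_dvd (subst_exp k g2) (slice k B p q')"
    unfolding not_standard_iff[OF normal] by blast
  have "dvd_off_slice k (subst_exp k g1) B"
      "Poly_Mapping.lookup g1 (T k) \<le> p'" "Poly_Mapping.lookup g1 (X (k + 1)) \<le> q"
    using g1(2) unfolding exp_dvd_slice_iff[OF B] by simp_all
  moreover have "dvd_off_slice k (subst_exp k g2) B"
      "Poly_Mapping.lookup g2 (T k) \<le> p" "Poly_Mapping.lookup g2 (X (k + 1)) \<le> q'"
    using g2(2) unfolding exp_dvd_slice_iff[OF B] by simp_all
  ultimately obtain g3 where "g3 \<in> mon_gens m a b k" "dvd_off_slice k (subst_exp k g3) B"
      "Poly_Mapping.lookup g3 (T k) \<le> min p' p" "Poly_Mapping.lookup g3 (X (k + 1)) \<le> min q q'"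
    using mon_gens_slice_min[OF k g1(1) _ _ _ g2(1)] by blast
  then have "\<not> standard m a b k (slice k B p q)"
    unfolding not_standard_iff[OF normal] exp_dvd_slice_iff[OF B] by auto
  then show False using std by contradiction
qed

section \<open>Regularity\<close>

lemma grid_vanishing:
  fixes G :: "nat \<Rightarrow> nat \<Rightarrow> 'a::zero"
  assumes shift: "\<And>p q. L p q \<Longrightarrow> (if p = 0 then 0 else G (p - 1) q) = (if q = 0 then 0 else G p (q - 1))"
    and row_or_column: "\<And>p q. L p q \<Longrightarrow> (\<forall>p'. L p' q) \<or> (\<forall>q'. L p q')"
    and down_p: "\<And>p q. L (Suc p) q \<Longrightarrow> L p q"
    and down_q: "\<And>p q. L p (Suc q) \<Longrightarrow> L p q"
    and "L p q"
  shows "G p q = 0"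
proof -
  have row: "G p q = 0" if "\<forall>p. L p q" for p q
    using that
  proof (induction q arbitrary: p)
    case 0
    then show ?case using shift[of "Suc p" 0] by simp
  next
    case (Suc q)
    then have "G (Suc p) q = 0" using down_q by blast
    then show ?case using shift[of "Suc p" "Suc q"] Suc.prems by simp
  qed
  have column: "G p q = 0" if "\<forall>q. L p q" for p q
    using that
  proof (induction p arbitrary: q)
    case 0
    then show ?case using shift[of 0 "Suc q"] by simp
  next
    case (Suc p)
    then have "G p (Suc q) = 0" using down_p by blast
    then show ?case using shift[of "Suc p" "Suc q"] Suc.prems by simp
  qed
  show ?thesis using row_or_column[OF \<open>L p q\<close>] row column by blast
qed

text \<open>For a standard \<open>c\<close>, let \<open>G p q\<close> be the coefficient sum of \<open>g\<close> at the exponent of \<open>c\<close> with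
  \<open>T\<^sub>k\<close>- and \<open>X\<^sub>k\<^sub>+\<^sub>1\<close>-degrees replaced by \<open>p\<close> and \<open>q\<close>. Since \<open>(T\<^sub>k - X\<^sub>k\<^sub>+\<^sub>1) g\<close> lies in the
  ideal, \<open>G\<close> is constant along antidiagonals of the standard region of this slice; as that
  region is closed downwards and made of whole rows and columns, this forces \<open>G = 0\<close>.\<close>

lemma seq_ideal_regular_T_X:
  assumes k: "1 \<le> k" "k \<le> m" and g: "g \<in> Sring m"
    and fg: "(mono (varexp (T k)) - mono (varexp (X (k + 1)))) * g \<in> (seq_ideal m a b k :: 'k::field mpoly set)"
  shows "g \<in> seq_ideal m a b k"
proof -
  have km: "k \<le> m + 1" using k by simp
  have "fiber_coeff (subst_exp k) c g = 0" if c: "standard m a b k c" for c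
  proof (cases "subst_normal m k c")
    case False
    then show ?thesis using fiber_coeff_subst_exp_not_normal[OF km g] by blast
  next
    case True
    obtain B where B0: "Poly_Mapping.lookup B (T k) = 0" "Poly_Mapping.lookup B (X (k + 1)) = 0"
      and c_eq: "slice k B (Poly_Mapping.lookup c (T k)) (Poly_Mapping.lookup c (X (k + 1))) = c"
      and normal: "\<And>p q. subst_normal m k (slice k B p q)"
      using k True by (rule subst_normal_slice_decomposition) blast
    define L where "L p q = standard m a b k (slice k B p q)" for p q
    define G where "G p q = fiber_coeff (subst_exp k) (slice k B p q) g" for p q
    have fixed_T: "subst_exp k (varexp (T k)) = varexp (T k)" by (rule subst_exp_varexp_T)
    have fixed_X: "subst_exp k (varexp (X (k + 1))) = varexp (X (k + 1))"
      by (rule subst_exp_varexp_X_fixed) simp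
    have "G (Poly_Mapping.lookup c (T k)) (Poly_Mapping.lookup c (X (k + 1))) = 0"
    proof (rule grid_vanishing[of L])
      show "(if p = 0 then 0 else G (p - 1) q) = (if q = 0 then 0 else G p (q - 1))" if "L p q" for p q
      proof -
        have "fiber_coeff (subst_exp k) (slice k B p q)
            (g * mono (varexp (T k)) - g * mono (varexp (X (k + 1)))) = 0"
          using fiber_coeff_seq_ideal[OF km _ fg] that unfolding L_def by (simp add: algebra_simps)
        then show ?thesis
          unfolding fiber_coeff_diff fiber_coeff_mult_fixed[OF fixed_T] fiber_coeff_mult_fixed[OF fixed_X]
            varexp_T_dvd_slice_iff[OF B0] varexp_X_dvd_slice_iff[OF B0] G_def
          by (auto simp: slice_diff_T slice_diff_X[simplified])
      qed
      show "(\<forall>p'. L p' q) \<or> (\<forall>q'. L p q')" if "L p q" for p q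
        using standard_slice_row_or_column[OF k B0 normal] that unfolding L_def by blast
      show "L p q" if "L (Suc p) q" for p q
        using that k fixed_T standard_of_standard_add[of "varexp (T k)" m k]
        unfolding L_def slice_add_T[symmetric] by simp
      show "L p q" if "L p (Suc q)" for p q
        using that k fixed_X standard_of_standard_add[of "varexp (X (k + 1))" m k]
        unfolding L_def slice_add_X[symmetric] by simp
      show "L (Poly_Mapping.lookup c (T k)) (Poly_Mapping.lookup c (X (k + 1)))"
        unfolding L_def c_eq by (rule c)
    qed
    then show ?thesis unfolding G_def c_eq .
  qed
  then show ?thesis using seq_ideal_iff[OF km g] by blast
qed

lemma lookup_X1_fst_rules: "g \<in> fst ` rules m a b \<Longrightarrow> Poly_Mapping.lookup g (X 1) = 0"
  unfolding rules_def by auto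

lemma seq_ideal_regular_X1:
  assumes g: "g \<in> Sring m"
    and fg: "mono (varexp (X 1)) * g \<in> (seq_ideal m a b 0 :: 'k::field mpoly set)"
  shows "g \<in> seq_ideal m a b 0"
proof -
  let ?e = "varexp (X 1)"
  have "fiber_coeff (subst_exp 0) c g = 0" if c: "standard m a b 0 c" for c
  proof -
    have "standard m a b 0 (c + ?e)"
      unfolding standard_def subst_exp_0
    proof (intro allI impI notI)
      fix \<nu> g' assume \<nu>: "Poly_Mapping.keys \<nu> \<subseteq> vars m" and g': "g' \<in> mon_gens m a b 0"
        and eq: "\<nu> + g' = c + ?e"
      have "Poly_Mapping.lookup g' (X 1) = 0" using g' lookup_X1_fst_rules by (simp add: mon_gens_def)
      then have "exp_dvd ?e \<nu>"
        using arg_cong[OF eq, of "\<lambda>\<alpha>. Poly_Mapping.lookup \<alpha> (X 1)"]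
        by (intro exp_dvdI) (auto simp: lookup_add lookup_varexp)
      then have \<nu>_eq: "\<nu> = (\<nu> - ?e) + ?e" by (simp add: exp_dvd_diff_add)
      then have "(\<nu> - ?e) + g' = c" using eq by (metis add.commute add.left_commute add_right_imp_eq)
      moreover have "Poly_Mapping.keys (\<nu> - ?e) \<subseteq> vars m" using \<nu> \<nu>_eq by (metis keys_add_nat le_sup_iff)
      ultimately show False using c g' unfolding standard_def subst_exp_0 by blast
    qed
    then have "fiber_coeff (subst_exp 0) (c + ?e) (g * mono ?e) = 0"
      using fiber_coeff_seq_ideal[of 0 m a b _ "mono ?e * g"] fg by (simp add: mult.commute)
    then show ?thesis
      using fiber_coeff_mult_fixed[OF subst_exp_0[of ?e], of "c + ?e" g] exp_dvd_add[of ?e c] by simp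
  qed
  then show ?thesis using seq_ideal_iff[of 0 m g] g by simp
qed

lemma one_notin_seq_ideal: "(1 :: 'k::field mpoly) \<notin> seq_ideal m a b (m + 1)"
proof
  assume one: "(1 :: 'k mpoly) \<in> seq_ideal m a b (m + 1)"
  have "standard m a b (m + 1) 0"
    unfolding standard_def
  proof (intro allI impI notI)
    fix \<nu> g assume g: "g \<in> mon_gens m a b (m + 1)" and "subst_exp (m + 1) (\<nu> + g) = 0"
    then have "Poly_Mapping.lookup (\<nu> + g) x = 0" for x by simp
    then have "Poly_Mapping.lookup g (X n) = 0" for n by (simp add: lookup_add)
    moreover have "\<exists>n. Poly_Mapping.lookup g (X n) = 1"
      using g by (cases rule: mon_gensE) (auto simp: lookup_varexp)
    ultimately show False by simp
  qed
  then have "fiber_coeff (subst_exp (m + 1)) 0 (1 :: 'k mpoly) = 0"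
    using one by (intro fiber_coeff_seq_ideal) simp_all
  moreover have "subst_exp (m + 1) 0 = 0" by simp
  then have "fiber_coeff (subst_exp (m + 1)) 0 (1 :: 'k mpoly) = 1"
    by (simp add: fiber_coeff_def keys_one lookup_one)
  ultimately show False by simp
qed

lemma set_reg_seq_subset_max_ideal:
  assumes "1 \<le> m"
  shows "set (reg_seq m :: 'k::field mpoly list) \<subseteq> max_ideal m"
proof -
  have "set (reg_seq m :: 'k mpoly list) = set (take (m + 1) (reg_seq m))" by simp
  also have "\<dots> = insert (mono (varexp (X 1))) ((\<lambda>j. mono (varexp (T j)) - mono (varexp (X (j + 1)))) ` {1..<m + 1})"
    by (subst set_take_reg_seq) simp_all
  also have "\<dots> \<subseteq> max_ideal m"
    using assms by (auto simp: max_ideal_def lookup_minus lookup_mono intro!: Sring_mono Sring_diff)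
  finally show ?thesis .
qed

theorem regular_seq_reg_seq:
  assumes "1 \<le> m" and ab: "\<forall>l\<in>{1..m}. b l \<le> a l"
  shows "regular_seq m (initial_ideal m (H0 m a b :: 'k::field mpoly set)) (reg_seq m)"
proof -
  let ?J = "initial_ideal m (H0 m a b :: 'k mpoly set)"
  have seq: "ideal_gen m (?J \<union> set (take k (reg_seq m))) = seq_ideal m a b k" for k
    unfolding initial_ideal_H0[OF ab] seq_ideal_def by (rule ideal_gen_Un_ideal_gen)
  have "g \<in> seq_ideal m a b k" if "k < m + 1" "g \<in> Sring m" "reg_seq m ! k * g \<in> seq_ideal m a b k" for k g
  proof (cases "k = 0")
    case True
    then show ?thesis using seq_ideal_regular_X1 that(2,3) by (simp add: nth_reg_seq_0)
  next
    case False
    then show ?thesis using seq_ideal_regular_T_X[OF _ _ that(2)] that(1,3) by (simp add: nth_reg_seq)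
  qed
  moreover have "ideal_gen m (?J \<union> set (reg_seq m)) \<noteq> Sring m"
    using seq[of "m + 1"] one_notin_seq_ideal Sring_one by (metis length_reg_seq take_all_iff order_refl)
  ultimately show ?thesis
    unfolding regular_seq_def seq using set_reg_seq_subset_max_ideal[OF assms(1)] by auto
qed

theorem proposition3p4:
  fixes m :: nat and a b :: "nat \<Rightarrow> nat"
  assumes "m \<ge> 3"
    and "\<forall>i\<in>{1..m}. b i < a i"
    and "\<exists>i\<in>{1..m}. \<exists>j\<in>{1..m}. i \<noteq> j \<and> b i \<noteq> 0 \<and> b j \<noteq> 0"
  shows "depth_quot m (initial_ideal m (H0 m a b :: 'k::field mpoly set)) \<ge> enat (m + 1)"
proof -
  have "regular_seq m (initial_ideal m (H0 m a b :: 'k mpoly set)) (reg_seq m)"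
    using assms(1,2) by (intro regular_seq_reg_seq) auto
  then show ?thesis
    unfolding depth_quot_def by (intro Sup_upper) force
qed

end
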